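(* Assume the standing hypotheses of the context, let $\varepsilon\in(0,\varepsilon_0]$, let $\boldsymbol\rho\in\mathcal P_2(\mathbb R^d)^2$ and let $\mathcal S\subset\mathcal P_2(\mathbb R^d)^2$ be any family. Then: (1) $\int[F_1(\rho_1)+F_2(\rho_2)]dx\le2\mathcal E_\varepsilon(\boldsymbol\rho)$ and $\int\rho_1K*\rho_2\,dx\le\mathcal E_\varepsilon(\boldsymbol\rho)$; in particular $\mathcal E_\varepsilon$ is uniformly bounded on $\mathcal S$ iff both $F_j(\rho_j)$ ($j=1,2$) and $\rho_1K*\rho_2$ are uniformly bounded in $L^1(\mathbb R^d)$ for $\boldsymbol\rho\in\mathcal S$. (2) With constants $\alpha_j$ such that $F_j'(r)\le\alpha_j(\min\{1,r\}+F_j(r))$ for all $r\ge0$: $\int F_j'(\rho_j)\,dx\le\alpha_j(1+2\mathcal E_\varepsilon(\boldsymbol\rho))$. (3) If $\boldsymbol\rho\in\mathfrak X_0$, then $\frac\lambda2(\mathfrak m_2[\rho_1]+\mathfrak m_2[\rho_2])\le\int\rho_1K*\rho_2\,dx\le C_K(\mathfrak m_2[\rho_1]+\mathfrak m_2[\rho_2])$; in particular, for $\mathcal S\subset\mathfrak X_0$ the interaction energy is uniformly bounded on $\mathcal S$ iff the second moments of $\rho_1,\rho_2$ are uniformly bounded for $\boldsymbol\rho\in\mathcal S$.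
   Context: Let $d\ge1$. Standing hypotheses. (K): $K:\mathbb R^d\to[0,\infty)$ radially symmetric, $K(0)=0$, $K\in C^2$, $\nabla^2K\ge\lambda\,\mathrm{Id}$ for some $\lambda>0$, $\|\nabla^2K\|\le C_K$. (F): for $j=1,2$, $F_j:[0,\infty)\to[0,\infty)$ is $C^2$, $F_j''>0$ on $(0,\infty)$, $F_j(0)=F_j'(0)=0$, $\liminf_{r\to\infty}F_j''(r)>0$, $\limsup_{r\to\infty}F_j'(r)/F_j(r)<\infty$; there are $m_j,M_j>0,\beta_j\ge0,r_0>0$ with $m_jr^{\beta_j}\le F_j''(r)\le M_jr^{\beta_j}$ on $[0,r_0]$; $F_j(r)-rF_j'(r)+r^2F_j''(r)\ge0$. (h): $h:[0,\infty)^2\to\mathbb R$ is $C^2$, $h$ and $\nabla h$ vanish on $\{r_1=0\}\cup\{r_2=0\}$. ($\theta$): with $\theta_{j,i}(\mathbf u)=\partial_{r_i}\partial_{r_j}h(\mathbf r)/F_i''(r_i)$, $r_k=(F_k')^{-1}(u_k)$, each $\theta_{j,i}$ is locally Lipschitz on $[0,\infty)^2$ and $|\theta_{j,i}(\mathbf u)|\le\kappa_{j,i}\min\{1,u_1,u_2,\sqrt{(F_i')^{-1}(u_i)/(F_j')^{-1}(u_j)}\}$ for constants $\kappa_{j,i}>0$. Notation: $\mathcal P_2(\mathbb R^d)$ probability measures with finite second moment (absolutely continuous ones identified with densities); $\mathfrak m_1[\rho]=\int x\rho$, $\mathfrak m_2[\rho]=\int|x|^2\rho$; $\mathfrak X_0=\{\boldsymbol\rho\in\mathcal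 P_2(\mathbb R^d)^2:\mathfrak m_1[\rho_1]+\mathfrak m_1[\rho_2]=0\}$; $\mathcal E_\varepsilon(\boldsymbol\rho)=\int[F_1(\rho_1)+F_2(\rho_2)+\varepsilon h(\rho_1,\rho_2)+\rho_1K*\rho_2]dx$, $=+\infty$ unless both components are absolutely continuous with integrand in $L^1$. $\varepsilon_0>0$ is a number such that $\mathbf r\mapsto F_1(r_1)+F_2(r_2)+2\varepsilon_0h(\mathbf r)$ is convex on $[0,\infty)^2$ (such a number exists under these hypotheses). *)

theory Defs
  imports "HOL-Probability.Probability"
begin

definition quadrant :: "(real \<times> real) set" where
  "quadrant = {0..} \<times> {0..}"

definition hyp_K :: "('a::euclidean_space \<Rightarrow> real) \<Rightarrow> ('a \<Rightarrow> 'a) \<Rightarrow> ('a \<Rightarrow> 'a \<Rightarrow>\<^sub>L 'a)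
    \<Rightarrow> real \<Rightarrow> real \<Rightarrow> bool" where
  "hyp_K K DK HK lam CK \<longleftrightarrow>
     (\<forall>x. 0 \<le> K x) \<and> (\<forall>x y. norm x = norm y \<longrightarrow> K x = K y) \<and> K 0 = 0 \<and>
     (\<forall>x. (K has_derivative (\<lambda>v. DK x \<bullet> v)) (at x)) \<and>
     (\<forall>x. (DK has_derivative blinfun_apply (HK x)) (at x)) \<and>
     continuous_on UNIV HK \<and>
     0 < lam \<and> (\<forall>x v. lam * (norm v)\<^sup>2 \<le> blinfun_apply (HK x) v \<bullet> v) \<and>
     (\<forall>x. norm (HK x) \<le> CK)"

text \<open>(F) for one function F with first and second derivative F' and F'' on [0,\<infinity>).
  The two-sided power bound on F'' is imposed on (0,r0]; at r = 0 it follows by continuity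
  of F'' (and avoids the Isabelle convention 0 powr 0 = 0).\<close>
definition hyp_F :: "(real \<Rightarrow> real) \<Rightarrow> (real \<Rightarrow> real) \<Rightarrow> (real \<Rightarrow> real) \<Rightarrow> bool" where
  "hyp_F F F' F'' \<longleftrightarrow>
     (\<forall>r\<ge>0. 0 \<le> F r) \<and>
     (\<forall>r\<ge>0. (F has_real_derivative F' r) (at r within {0..})) \<and>
     (\<forall>r\<ge>0. (F' has_real_derivative F'' r) (at r within {0..})) \<and>
     continuous_on {0..} F'' \<and>
     (\<forall>r>0. 0 < F'' r) \<and> F 0 = 0 \<and> F' 0 = 0 \<and>
     Liminf at_top (\<lambda>r. ereal (F'' r)) > 0 \<and>
     Limsup at_top (\<lambda>r. ereal (F' r / F r)) < \<infinity> \<and>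
     (\<exists>m M \<beta> r0. 0 < m \<and> 0 < M \<and> 0 \<le> \<beta> \<and> 0 < r0 \<and>
        (\<forall>r. 0 < r \<and> r \<le> r0 \<longrightarrow> m * r powr \<beta> \<le> F'' r \<and> F'' r \<le> M * r powr \<beta>)) \<and>
     (\<forall>r\<ge>0. F r - r * F' r + r\<^sup>2 * F'' r \<ge> 0)"

definition hyp_h :: "(real \<times> real \<Rightarrow> real) \<Rightarrow> (real \<times> real \<Rightarrow> real \<times> real)
    \<Rightarrow> (real \<times> real \<Rightarrow> (real \<times> real) \<Rightarrow>\<^sub>L (real \<times> real)) \<Rightarrow> bool" where
  "hyp_h h Dh Hh \<longleftrightarrow>
     (\<forall>r\<in>quadrant. (h has_derivative (\<lambda>v. Dh r \<bullet> v)) (at r within quadrant)) \<and>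
     (\<forall>r\<in>quadrant. (Dh has_derivative blinfun_apply (Hh r)) (at r within quadrant)) \<and>
     continuous_on quadrant Hh \<and>
     (\<forall>r\<in>quadrant. (fst r = 0 \<or> snd r = 0) \<longrightarrow> h r = 0 \<and> Dh r = 0)"

definition coord :: "nat \<Rightarrow> real \<times> real \<Rightarrow> real" where
  "coord i v = (if i = 1 then fst v else snd v)"

definition unitv :: "nat \<Rightarrow> real \<times> real" where
  "unitv i = (if i = 1 then (1, 0) else (0, 1))"

definition d2h :: "(real \<times> real \<Rightarrow> (real \<times> real) \<Rightarrow>\<^sub>L (real \<times> real)) \<Rightarrow> nat \<Rightarrow> nat
    \<Rightarrow> real \<times> real \<Rightarrow> real" where
  "d2h Hh i j r = blinfun_apply (Hh r) (unitv j) \<bullet> unitv i"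

definition rinv :: "(real \<Rightarrow> real) \<Rightarrow> (real \<Rightarrow> real) \<Rightarrow> real \<times> real \<Rightarrow> real \<times> real" where
  "rinv F1' F2' u = (the_inv_into {0..} F1' (fst u), the_inv_into {0..} F2' (snd u))"

text \<open>(theta): for all i,j in {1,2}, theta_{j,i}(u) = d_{r_i} d_{r_j} h(r) / F_i''(r_i) (where
  F_i''(r_i) > 0, i.e. u_i > 0) extends to a locally Lipschitz function on [0,\<infinity>)^2
  satisfying the stated bound.\<close>
definition hyp_theta :: "(real \<Rightarrow> real) \<Rightarrow> (real \<Rightarrow> real) \<Rightarrow> (real \<Rightarrow> real) \<Rightarrow> (real \<Rightarrow> real)
    \<Rightarrow> (real \<times> real \<Rightarrow> (real \<times> real) \<Rightarrow>\<^sub>L (real \<times> real)) \<Rightarrow> bool" where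
  "hyp_theta F1' F1'' F2' F2'' Hh \<longleftrightarrow>
     (\<forall>i\<in>{1::nat,2}. \<forall>j\<in>{1::nat,2}. \<exists>\<theta> :: real \<times> real \<Rightarrow> real. \<exists>\<kappa>::real. 0 < \<kappa> \<and>
        (\<forall>u\<in>quadrant. \<exists>e>0. \<exists>L. L-lipschitz_on (cball u e \<inter> quadrant) \<theta>) \<and>
        (\<forall>u\<in>quadrant. 0 < coord i u \<longrightarrow>
           \<theta> u = d2h Hh i j (rinv F1' F2' u) /
                 (if i = 1 then F1'' else F2'') (coord i (rinv F1' F2' u))) \<and>
        (\<forall>u\<in>quadrant. \<bar>\<theta> u\<bar> \<le> \<kappa> * min (min 1 (fst u)) (min (snd u)
            (sqrt (coord i (rinv F1' F2' u) / coord j (rinv F1' F2' u))))))"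

definition P2 :: "'a::euclidean_space measure \<Rightarrow> bool" where
  "P2 \<mu> \<longleftrightarrow> prob_space \<mu> \<and> sets \<mu> = sets borel \<and> integrable \<mu> (\<lambda>x. (norm x)\<^sup>2)"

definition mom1 :: "'a::euclidean_space measure \<Rightarrow> 'a" where
  "mom1 \<mu> = (\<integral>x. x \<partial>\<mu>)"

definition mom2 :: "'a::euclidean_space measure \<Rightarrow> real" where
  "mom2 \<mu> = (\<integral>x. (norm x)\<^sup>2 \<partial>\<mu>)"

definition X0 :: "('a::euclidean_space measure \<times> 'a measure) set" where
  "X0 = {p. P2 (fst p) \<and> P2 (snd p) \<and> mom1 (fst p) + mom1 (snd p) = 0}"

definition is_dens :: "'a::euclidean_space measure \<Rightarrow> ('a \<Rightarrow> real) \<Rightarrow> bool" where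
  "is_dens \<mu> f \<longleftrightarrow> f \<in> borel_measurable lborel \<and> (\<forall>x. 0 \<le> f x) \<and>
     \<mu> = density lborel (\<lambda>x. ennreal (f x))"

definition conv :: "('a::euclidean_space \<Rightarrow> real) \<Rightarrow> ('a \<Rightarrow> real) \<Rightarrow> 'a \<Rightarrow> real" where
  "conv K f x = (\<integral>y. K (x - y) * f y \<partial>lborel)"

text \<open>Interaction energy \<integral> \<rho>1 K*\<rho>2 = \<integral>\<integral> K(x-y) d\<rho>2(y) d\<rho>1(x) (for general measures).\<close>
definition inter :: "('a::euclidean_space \<Rightarrow> real) \<Rightarrow> 'a measure \<Rightarrow> 'a measure \<Rightarrow> ennreal" where
  "inter K \<mu> \<nu> = (\<integral>\<^sup>+ x. (\<integral>\<^sup>+ y. ennreal (K (x - y)) \<partial>\<nu>) \<partial>\<mu>)"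

definition integrand :: "(real \<Rightarrow> real) \<Rightarrow> (real \<Rightarrow> real) \<Rightarrow> (real \<times> real \<Rightarrow> real)
    \<Rightarrow> ('a::euclidean_space \<Rightarrow> real) \<Rightarrow> real \<Rightarrow> ('a \<Rightarrow> real) \<Rightarrow> ('a \<Rightarrow> real) \<Rightarrow> 'a \<Rightarrow> real" where
  "integrand F1 F2 h K \<epsilon> f1 f2 x =
     F1 (f1 x) + F2 (f2 x) + \<epsilon> * h (f1 x, f2 x) + f1 x * conv K f2 x"

definition energy :: "(real \<Rightarrow> real) \<Rightarrow> (real \<Rightarrow> real) \<Rightarrow> (real \<times> real \<Rightarrow> real)
    \<Rightarrow> ('a::euclidean_space \<Rightarrow> real) \<Rightarrow> real \<Rightarrow> 'a measure \<times> 'a measure \<Rightarrow> ereal" where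
  "energy F1 F2 h K \<epsilon> p =
     (if \<exists>f1 f2. is_dens (fst p) f1 \<and> is_dens (snd p) f2 \<and>
                 integrable lborel (integrand F1 F2 h K \<epsilon> f1 f2)
      then (let (f1, f2) = (SOME (f1, f2). is_dens (fst p) f1 \<and> is_dens (snd p) f2 \<and>
                 integrable lborel (integrand F1 F2 h K \<epsilon> f1 f2))
            in ereal (\<integral>x. integrand F1 F2 h K \<epsilon> f1 f2 x \<partial>lborel))
      else \<infinity>)"

end

(*
  Convexity of F1 + F2 + 2 \<epsilon>0 h on the quadrant, together with h = 0 and \<nabla>h = 0 on the
  axes, makes F1 + F2 + 2 \<epsilon>0 h a convex function with zero derivative at the corner 0,
  hence nonnegative.  Since F1 + F2 + \<epsilon> h is a convex combination of F1 + F2 and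
  F1 + F2 + 2 \<epsilon>0 h with weight at least 1/2 on the former, the energy density dominates
  (F1 + F2)/2 and (as every term is then nonnegative) the interaction density \<rho>1 K*\<rho>2;
  with F' \<le> \<alpha> (min 1 r + F) and \<integral>\<rho> = 1 this also controls \<integral>F'(\<rho>).  Conversely, comparing
  second derivatives in r1 with the case i = j = 1 of (\<theta>) gives |h| \<le> \<kappa> F1(r1), so
  L1 bounds on the three terms bound the energy.

  For the interaction energy, Taylor expansion of K along rays gives
  \<lambda>/2 |z|^2 \<le> K z \<le> C_K/2 |z|^2.  Integrating |x - y|^2 against \<rho>1 \<otimes> \<rho>2 yields
  m2[\<rho>1] + m2[\<rho>2] - 2 m1[\<rho>1] \<bullet> m1[\<rho>2], and on X0 the cross term equals 2 |m1[\<rho>1]|^2 \<ge> 0.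
*)
theory Submission
  imports Defs
begin

section \<open>Second-order comparison and convexity\<close>

lemma DERIV2_nonneg_imp_nonneg:
  fixes f f' f'' :: "real \<Rightarrow> real"
  assumes "0 \<le> a"
    and f': "\<And>t. t \<in> {0..a} \<Longrightarrow> (f has_real_derivative f' t) (at t within {0..a})"
    and f'': "\<And>t. t \<in> {0..a} \<Longrightarrow> (f' has_real_derivative f'' t) (at t within {0..a})"
    and f''_nonneg: "\<And>t. 0 < t \<Longrightarrow> t < a \<Longrightarrow> 0 \<le> f'' t"
    and "f 0 = 0" "f' 0 = 0"
  shows "0 \<le> f a"
proof -
  have increasing: "g 0 \<le> g t"
    if "t \<in> {0..a}" and "\<And>t. t \<in> {0..a} \<Longrightarrow> (g has_real_derivative g' t) (at t within {0..a})"
      and "\<And>t. 0 < t \<Longrightarrow> t < a \<Longrightarrow> 0 \<le> g' t" for g g' :: "real \<Rightarrow> real" and t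
  proof (rule DERIV_nonneg_imp_increasing_open[of 0 t g])
    show "continuous_on {0..t} g"
      by (rule continuous_on_subset[OF DERIV_continuous_on[OF that(2)]]) (use that(1) in auto)
    fix x assume "0 < x" "x < t"
    with that show "\<exists>y. (g has_real_derivative y) (at x) \<and> 0 \<le> y"
      by (metis atLeastAtMost_iff at_within_Icc_at less_eq_real_def order_less_le_trans)
  qed (use that in auto)
  have "0 \<le> f' t" if "t \<in> {0..a}" for t
    using increasing[OF that f'' f''_nonneg] \<open>f' 0 = 0\<close> by simp
  then show ?thesis
    using increasing[of a f f'] f' \<open>0 \<le> a\<close> \<open>f 0 = 0\<close> by fastforce
qed

lemma DERIV2_abs_le_imp_abs_le:
  fixes f f' f'' g g' g'' :: "real \<Rightarrow> real"
  assumes "0 \<le> a"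
    and f': "\<And>t. t \<in> {0..a} \<Longrightarrow> (f has_real_derivative f' t) (at t within {0..a})"
    and f'': "\<And>t. t \<in> {0..a} \<Longrightarrow> (f' has_real_derivative f'' t) (at t within {0..a})"
    and g': "\<And>t. t \<in> {0..a} \<Longrightarrow> (g has_real_derivative g' t) (at t within {0..a})"
    and g'': "\<And>t. t \<in> {0..a} \<Longrightarrow> (g' has_real_derivative g'' t) (at t within {0..a})"
    and le: "\<And>t. 0 < t \<Longrightarrow> t < a \<Longrightarrow> \<bar>f'' t\<bar> \<le> g'' t"
    and "f 0 = 0" "f' 0 = 0" "g 0 = 0" "g' 0 = 0"
  shows "\<bar>f a\<bar> \<le> g a"
proof -
  have le': "0 \<le> g'' t - f'' t" "0 \<le> g'' t + f'' t" if "0 < t" "t < a" for t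
    using le[OF that] by auto
  have "0 \<le> g a - f a"
    by (rule DERIV2_nonneg_imp_nonneg[of a _ "\<lambda>t. g' t - f' t" "\<lambda>t. g'' t - f'' t"])
      (use assms le' in \<open>auto intro!: derivative_eq_intros\<close>)
  moreover have "0 \<le> g a + f a"
    by (rule DERIV2_nonneg_imp_nonneg[of a _ "\<lambda>t. g' t + f' t" "\<lambda>t. g'' t + f'' t"])
      (use assms le' in \<open>auto intro!: derivative_eq_intros\<close>)
  ultimately show ?thesis by linarith
qed

lemma convex_on_le_of_zero_derivative:
  fixes G :: "'a::real_normed_vector \<Rightarrow> real"
  assumes cv: "convex_on S G" and "x \<in> S" "y \<in> S"
    and G': "(G has_derivative (\<lambda>v. 0)) (at x within S)"
  shows "G x \<le> G y"
proof -
  define p where "p t = x + t *\<^sub>R (y - x)" for t :: real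
  have p_in: "p ` {0..1} \<subseteq> S"
    using convex_onD[OF cv, of _ x y] cv \<open>x \<in> S\<close> \<open>y \<in> S\<close>
    by (auto simp: p_def convex_on_def convex_alt algebra_simps)
  have "(p has_derivative (\<lambda>t. t *\<^sub>R (y - x))) (at 0 within {0..1})"
    unfolding p_def by (auto intro!: derivative_eq_intros)
  moreover have "(G has_derivative (\<lambda>v. 0)) (at (p 0) within p ` {0..1})"
    using has_derivative_subset[OF G' p_in] by (simp add: p_def)
  ultimately have "((G \<circ> p) has_derivative (\<lambda>t. 0)) (at 0 within {0..1})"
    using diff_chain_within by (fastforce simp: o_def)
  then have "((\<lambda>t. (G (p t) - G x) / t) \<longlongrightarrow> 0) (at_right 0)"
    by (auto simp: has_derivative_within at_within_Icc_at_right p_def divide_inverse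
        elim!: Lim_transform_eventually intro!: eventually_at_rightI[of 0 1])
  moreover have "\<forall>\<^sub>F t in at_right 0. (G (p t) - G x) / t \<le> G y - G x"
  proof (rule eventually_at_rightI[of 0 1])
    fix t :: real assume t: "t \<in> {0<..<1}"
    have "G ((1 - t) *\<^sub>R x + t *\<^sub>R y) \<le> (1 - t) * G x + t * G y"
      using t \<open>x \<in> S\<close> \<open>y \<in> S\<close> by (intro convex_onD[OF cv]) auto
    then show "(G (p t) - G x) / t \<le> G y - G x"
      using t by (simp add: p_def divide_simps algebra_simps)
  qed simp
  ultimately have "0 \<le> G y - G x"
    by (rule tendsto_upperbound) simp
  then show ?thesis by simp
qed

section \<open>The nonlinearities F and h\<close>

lemma hyp_F_nonneg: "hyp_F F F' F'' \<Longrightarrow> 0 \<le> r \<Longrightarrow> 0 \<le> F r"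
  by (simp add: hyp_F_def)

lemma hyp_F_zero: "hyp_F F F' F'' \<Longrightarrow> F 0 = 0" "hyp_F F F' F'' \<Longrightarrow> F' 0 = 0"
  by (simp_all add: hyp_F_def)

lemma hyp_F_continuous_on: "hyp_F F F' F'' \<Longrightarrow> continuous_on {0..} F"
  by (rule DERIV_continuous_on[where D = F']) (simp add: hyp_F_def)

lemma hyp_F_deriv_strict_mono:
  assumes hF: "hyp_F F F' F''" and "0 \<le> x" "x < y"
  shows "F' x < F' y"
proof (rule DERIV_pos_imp_increasing_open[of x y F'])
  have F'': "\<And>r. r \<in> {0..} \<Longrightarrow> (F' has_real_derivative F'' r) (at r within {0..})"
    and F''_pos: "\<And>r. 0 < r \<Longrightarrow> 0 < F'' r"
    using hF by (simp_all add: hyp_F_def)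
  from DERIV_continuous_on[OF F''] show "continuous_on {x..y} F'"
    by (rule continuous_on_subset) (use \<open>0 \<le> x\<close> in auto)
  fix t assume t: "x < t" "t < y"
  then have "at t within {0..} = at t"
    using \<open>0 \<le> x\<close> by (intro at_within_interior) auto
  moreover have "0 < t"
    using t \<open>0 \<le> x\<close> by linarith
  ultimately show "\<exists>d. (F' has_real_derivative d) (at t) \<and> 0 < d"
    using F''[of t] F''_pos[of t] by auto
qed fact

lemma hyp_F_deriv_pos: "hyp_F F F' F'' \<Longrightarrow> 0 < r \<Longrightarrow> 0 < F' r"
  using hyp_F_deriv_strict_mono[of F F' F'' 0 r] hyp_F_zero(2)[of F F' F''] by simp

lemma hyp_F_deriv_nonneg: "hyp_F F F' F'' \<Longrightarrow> 0 \<le> r \<Longrightarrow> 0 \<le> F' r"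
  using hyp_F_deriv_pos[of F F' F'' r] hyp_F_zero(2)[of F F' F''] by (cases "r = 0") auto

lemma hyp_F_inj_on_deriv: "hyp_F F F' F'' \<Longrightarrow> inj_on F' {0..}"
  by (rule inj_onI) (metis atLeast_iff hyp_F_deriv_strict_mono linorder_neq_iff less_irrefl)

lemma hyp_F_deriv_bound_coeff_pos:
  assumes hF: "hyp_F F F' F''" and \<alpha>: "\<forall>r\<ge>0. F' r \<le> \<alpha> * (min 1 r + F r)"
  shows "0 < \<alpha>"
proof -
  have "F' 1 \<le> \<alpha> * (1 + F 1)"
    using spec[OF \<alpha>, of 1] by simp
  then have "0 < \<alpha> * (1 + F 1)"
    using hyp_F_deriv_pos[OF hF, of 1] by linarith
  then show ?thesis
    using hyp_F_nonneg[OF hF, of 1] by (simp add: zero_less_mult_iff)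
qed

lemma hyp_theta_d2h_11_le:
  assumes hF1: "hyp_F F1 F1' F1''" and hF2: "hyp_F F2 F2' F2''"
    and htheta: "hyp_theta F1' F1'' F2' F2'' Hh"
  obtains \<kappa> where "0 < \<kappa>"
    "\<And>s r2. 0 < s \<Longrightarrow> 0 \<le> r2 \<Longrightarrow> \<bar>d2h Hh 1 1 (s, r2)\<bar> \<le> \<kappa> * F1'' s"
proof -
  obtain \<theta> :: "real \<times> real \<Rightarrow> real" and \<kappa> where "0 < \<kappa>"
    and \<theta>_eq: "\<forall>u\<in>quadrant. 0 < coord 1 u \<longrightarrow>
       \<theta> u = d2h Hh 1 1 (rinv F1' F2' u) /
         (if (1::nat) = 1 then F1'' else F2'') (coord 1 (rinv F1' F2' u))"
    and \<theta>_le: "\<forall>u\<in>quadrant. \<bar>\<theta> u\<bar> \<le> \<kappa> * min (min 1 (fst u)) (min (snd u)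
       (sqrt (coord 1 (rinv F1' F2' u) / coord 1 (rinv F1' F2' u))))"
    using htheta unfolding hyp_theta_def by blast
  have "\<bar>d2h Hh 1 1 (s, r2)\<bar> \<le> \<kappa> * F1'' s" if "0 < s" "0 \<le> r2" for s r2
  proof -
    define u where "u = (F1' s, F2' r2)"
    have u: "u \<in> quadrant" "0 < coord 1 u"
      using hyp_F_deriv_pos[OF hF1 that(1)] hyp_F_deriv_nonneg[OF hF2 that(2)]
      by (auto simp: u_def quadrant_def coord_def)
    have "rinv F1' F2' u = (s, r2)"
      using that by (simp add: u_def rinv_def the_inv_into_f_f hyp_F_inj_on_deriv[OF hF1]
          hyp_F_inj_on_deriv[OF hF2])
    moreover have "0 < F1'' s"
      using hF1 that by (simp add: hyp_F_def)
    moreover have "\<bar>\<theta> u\<bar> \<le> \<kappa>"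
    proof -
      have "\<bar>\<theta> u\<bar> \<le> \<kappa> * min (min 1 (fst u)) (min (snd u)
          (sqrt (coord 1 (rinv F1' F2' u) / coord 1 (rinv F1' F2' u))))"
        using \<theta>_le u(1) by blast
      also have "\<dots> \<le> \<kappa> * 1"
        using \<open>0 < \<kappa>\<close> by (intro mult_left_mono) auto
      finally show ?thesis by simp
    qed
    ultimately show ?thesis
      using \<theta>_eq u by (simp add: coord_def abs_div pos_divide_le_eq)
  qed
  with \<open>0 < \<kappa>\<close> that show thesis by blast
qed

lemma hyp_h_vanishes_on_axes:
  "hyp_h h Dh Hh \<Longrightarrow> r \<in> quadrant \<Longrightarrow> fst r = 0 \<or> snd r = 0 \<Longrightarrow> h r = 0 \<and> Dh r = 0"
  unfolding hyp_h_def by blast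

lemma hyp_h_continuous_on: "hyp_h h Dh Hh \<Longrightarrow> continuous_on quadrant h"
  unfolding hyp_h_def continuous_on_eq_continuous_within using has_derivative_continuous by blast

lemma hyp_h_partial_derivatives:
  assumes hh: "hyp_h h Dh Hh" and "0 \<le> r2" "s \<in> T" "T \<subseteq> {0..}"
  shows "((\<lambda>s. h (s, r2)) has_real_derivative fst (Dh (s, r2))) (at s within T)"
    and "((\<lambda>s. fst (Dh (s, r2))) has_real_derivative d2h Hh 1 1 (s, r2)) (at s within T)"
proof -
  have line: "((\<lambda>s. (s, r2)) has_derivative (\<lambda>x. (x, 0))) (at s within T)"
    by (auto intro!: derivative_eq_intros)
  have img: "(\<lambda>s. (s, r2)) ` T \<subseteq> quadrant"
    using assms by (auto simp: quadrant_def)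
  have h': "\<And>r. r \<in> quadrant \<Longrightarrow> (h has_derivative (\<lambda>v. Dh r \<bullet> v)) (at r within quadrant)"
    and Dh': "\<And>r. r \<in> quadrant \<Longrightarrow> (Dh has_derivative blinfun_apply (Hh r)) (at r within quadrant)"
    using hh unfolding hyp_h_def by auto
  have "((\<lambda>s. h (s, r2)) has_derivative (\<lambda>x. Dh (s, r2) \<bullet> (x, 0))) (at s within T)"
    by (rule has_derivative_in_compose2[OF h' img \<open>s \<in> T\<close> line])
  moreover have "(\<lambda>x. Dh (s, r2) \<bullet> (x, 0)) = (*) (fst (Dh (s, r2)))"
    by (auto simp: fun_eq_iff inner_Pair_0)
  ultimately show "((\<lambda>s. h (s, r2)) has_real_derivative fst (Dh (s, r2))) (at s within T)"
    by (simp add: has_field_derivative_def)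
  have "((\<lambda>s. Dh (s, r2)) has_derivative (\<lambda>x. Hh (s, r2) (x, 0))) (at s within T)"
    by (rule has_derivative_in_compose2[OF Dh' img \<open>s \<in> T\<close> line])
  then have "((\<lambda>s. fst (Dh (s, r2))) has_derivative (\<lambda>x. fst (Hh (s, r2) (x, 0)))) (at s within T)"
    by (rule has_derivative_fst)
  moreover have "fst (Hh (s, r2) (x, 0)) = d2h Hh 1 1 (s, r2) * x" for x
    using blinfun.scaleR_right[of "Hh (s, r2)" x "(1, 0)"]
    by (simp add: d2h_def unitv_def inner_Pair_0 mult.commute)
  ultimately show "((\<lambda>s. fst (Dh (s, r2))) has_real_derivative d2h Hh 1 1 (s, r2)) (at s within T)"
    by (simp add: has_field_derivative_def)
qed

lemma abs_h_le_F1: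
  assumes hF1: "hyp_F F1 F1' F1''" and hF2: "hyp_F F2 F2' F2''"
    and hh: "hyp_h h Dh Hh" and htheta: "hyp_theta F1' F1'' F2' F2'' Hh"
  obtains \<kappa> where "0 \<le> \<kappa>" "\<And>r. r \<in> quadrant \<Longrightarrow> \<bar>h r\<bar> \<le> \<kappa> * F1 (fst r)"
proof -
  obtain \<kappa> where "0 < \<kappa>"
    and d2h_le: "\<And>s r2. 0 < s \<Longrightarrow> 0 \<le> r2 \<Longrightarrow> \<bar>d2h Hh 1 1 (s, r2)\<bar> \<le> \<kappa> * F1'' s"
    using hyp_theta_d2h_11_le[OF hF1 hF2 htheta] by blast
  have bound: "\<bar>h (a, r2)\<bar> \<le> \<kappa> * F1 a" if "0 \<le> a" "0 \<le> r2" for a r2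
  proof (rule DERIV2_abs_le_imp_abs_le[OF \<open>0 \<le> a\<close>])
    fix t assume t: "t \<in> {0..a}"
    show "((\<lambda>s. h (s, r2)) has_real_derivative fst (Dh (t, r2))) (at t within {0..a})"
      and "((\<lambda>s. fst (Dh (s, r2))) has_real_derivative d2h Hh 1 1 (t, r2)) (at t within {0..a})"
      using hyp_h_partial_derivatives[OF hh \<open>0 \<le> r2\<close> t] by auto
    have "(F1 has_real_derivative F1' t) (at t within {0..a})"
      "(F1' has_real_derivative F1'' t) (at t within {0..a})"
      using hF1 t by (auto simp: hyp_F_def intro: has_field_derivative_subset[of _ _ _ "{0..}"])
    then show "((\<lambda>s. \<kappa> * F1 s) has_real_derivative \<kappa> * F1' t) (at t within {0..a})"
      and "((\<lambda>s. \<kappa> * F1' s) has_real_derivative \<kappa> * F1'' t) (at t within {0..a})"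
      by (simp_all add: DERIV_cmult)
  next
    show "h (0, r2) = 0" "fst (Dh (0, r2)) = 0"
      using hyp_h_vanishes_on_axes[OF hh, of "(0, r2)"] \<open>0 \<le> r2\<close> by (auto simp: quadrant_def)
  qed (use d2h_le \<open>0 \<le> r2\<close> hyp_F_zero[OF hF1] in auto)
  show thesis
  proof (rule that)
    show "0 \<le> \<kappa>"
      using \<open>0 < \<kappa>\<close> by simp
    fix r assume "r \<in> quadrant"
    then show "\<bar>h r\<bar> \<le> \<kappa> * F1 (fst r)"
      using bound[of "fst r" "snd r"] by (simp add: quadrant_def mem_Times_iff)
  qed
qed

lemma convex_F_plus_h_nonneg:
  assumes hF1: "hyp_F F1 F1' F1''" and hF2: "hyp_F F2 F2' F2''" and hh: "hyp_h h Dh Hh"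
    and cv: "convex_on quadrant (\<lambda>r. F1 (fst r) + F2 (snd r) + c * h r)"
    and "r \<in> quadrant"
  shows "0 \<le> F1 (fst r) + F2 (snd r) + c * h r"
proof -
  let ?G = "\<lambda>r. F1 (fst r) + F2 (snd r) + c * h r"
  have zero: "0 \<in> quadrant"
    by (simp add: quadrant_def zero_prod_def)
  have F1': "\<And>r. r \<in> {0..} \<Longrightarrow> (F1 has_derivative (*) (F1' r)) (at r within {0..})"
    using hF1 by (simp add: hyp_F_def has_field_derivative_def)
  have F2': "\<And>r. r \<in> {0..} \<Longrightarrow> (F2 has_derivative (*) (F2' r)) (at r within {0..})"
    using hF2 by (simp add: hyp_F_def has_field_derivative_def)
  have h': "(h has_derivative (\<lambda>v. Dh 0 \<bullet> v)) (at 0 within quadrant)"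
    using hh zero unfolding hyp_h_def by blast
  have fst_quadrant: "fst ` quadrant \<subseteq> {0..}" and snd_quadrant: "snd ` quadrant \<subseteq> {0..}"
    by (auto simp: quadrant_def)
  have "((\<lambda>r. F1 (fst r)) has_derivative (\<lambda>v. F1' 0 * fst v)) (at 0 within quadrant)"
    using has_derivative_in_compose2[OF F1' fst_quadrant zero has_derivative_fst[OF has_derivative_ident]]
    by simp
  moreover have "((\<lambda>r. F2 (snd r)) has_derivative (\<lambda>v. F2' 0 * snd v)) (at 0 within quadrant)"
    using has_derivative_in_compose2[OF F2' snd_quadrant zero has_derivative_snd[OF has_derivative_ident]]
    by simp
  ultimately have "(?G has_derivative (\<lambda>v. F1' 0 * fst v + F2' 0 * snd v + c * (Dh 0 \<bullet> v)))
      (at 0 within quadrant)"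
    by (intro has_derivative_add has_derivative_mult_right h')
  moreover have "Dh 0 = 0" "h 0 = 0"
    using hyp_h_vanishes_on_axes[OF hh zero] by simp_all
  ultimately have "(?G has_derivative (\<lambda>v. 0)) (at 0 within quadrant)"
    using hyp_F_zero[OF hF1] hyp_F_zero[OF hF2] by simp
  then have "?G 0 \<le> ?G r"
    by (rule convex_on_le_of_zero_derivative[OF cv zero \<open>r \<in> quadrant\<close>])
  moreover have "?G 0 = 0"
    using \<open>h 0 = 0\<close> hyp_F_zero[OF hF1] hyp_F_zero[OF hF2] by simp
  ultimately show ?thesis by simp
qed

lemma F_sum_le_twice_F_plus_h:
  assumes hF1: "hyp_F F1 F1' F1''" and hF2: "hyp_F F2 F2' F2''" and hh: "hyp_h h Dh Hh"
    and cv: "convex_on quadrant (\<lambda>r. F1 (fst r) + F2 (snd r) + 2 * \<epsilon>0 * h r)"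
    and \<epsilon>: "0 < \<epsilon>" "\<epsilon> \<le> \<epsilon>0" and "r \<in> quadrant"
  shows "F1 (fst r) + F2 (snd r) \<le> 2 * (F1 (fst r) + F2 (snd r) + \<epsilon> * h r)"
proof -
  define c where "c = \<epsilon> / (2 * \<epsilon>0)"
  have c: "0 < c" "c \<le> 1 / 2"
    using \<epsilon> by (simp_all add: c_def)
  have G: "0 \<le> F1 (fst r) + F2 (snd r) + 2 * \<epsilon>0 * h r"
    by (rule convex_F_plus_h_nonneg[OF hF1 hF2 hh cv \<open>r \<in> quadrant\<close>])
  have F: "0 \<le> F1 (fst r)" "0 \<le> F2 (snd r)"
    using \<open>r \<in> quadrant\<close> by (auto simp: quadrant_def intro: hyp_F_nonneg[OF hF1] hyp_F_nonneg[OF hF2])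
  have "(1 / 2) * (F1 (fst r) + F2 (snd r))
      \<le> (1 - c) * (F1 (fst r) + F2 (snd r)) + c * (F1 (fst r) + F2 (snd r) + 2 * \<epsilon>0 * h r)"
    using c F G by (intro add_increasing2 mult_right_mono) simp_all
  also have "\<dots> = F1 (fst r) + F2 (snd r) + \<epsilon> * h r"
    using \<epsilon> by (simp add: c_def field_simps)
  finally show ?thesis by (simp add: field_simps)
qed

section \<open>The kernel K\<close>

lemma hyp_K_nonneg: "hyp_K K DK HK lam CK \<Longrightarrow> 0 \<le> K x"
  unfolding hyp_K_def by blast

lemma hyp_K_zero: "hyp_K K DK HK lam CK \<Longrightarrow> K 0 = 0"
  unfolding hyp_K_def by blast

lemma hyp_K_has_derivative: "hyp_K K DK HK lam CK \<Longrightarrow> (K has_derivative (\<lambda>v. DK x \<bullet> v)) (at x)"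
  unfolding hyp_K_def by blast

lemma hyp_K_gradient_has_derivative: "hyp_K K DK HK lam CK \<Longrightarrow> (DK has_derivative HK x) (at x)"
  unfolding hyp_K_def by blast

lemma hyp_K_hessian_ge: "hyp_K K DK HK lam CK \<Longrightarrow> lam * (norm v)\<^sup>2 \<le> HK x v \<bullet> v"
  unfolding hyp_K_def by blast

lemma hyp_K_hessian_norm_le: "hyp_K K DK HK lam CK \<Longrightarrow> norm (HK x) \<le> CK"
  unfolding hyp_K_def by blast

lemma hyp_K_lam_pos: "hyp_K K DK HK lam CK \<Longrightarrow> 0 < lam"
  unfolding hyp_K_def by blast

lemma hyp_K_CK_nonneg: "hyp_K K DK HK lam CK \<Longrightarrow> 0 \<le> CK"
  using hyp_K_hessian_norm_le norm_ge_zero order_trans by blast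

lemma hyp_K_measurable:
  assumes hK: "hyp_K K DK HK lam CK"
  shows "K \<in> borel_measurable borel"
proof (rule borel_measurable_continuous_onI)
  show "continuous_on UNIV K"
    using has_derivative_continuous[OF hyp_K_has_derivative[OF hK]]
    by (blast intro: continuous_at_imp_continuous_on)
qed

lemma hyp_K_gradient_zero:
  assumes hK: "hyp_K K DK HK lam CK"
  shows "DK 0 = 0"
proof -
  have "(\<lambda>v. DK 0 \<bullet> v) = (\<lambda>v. 0)"
    using hyp_K_has_derivative[OF hK] hyp_K_nonneg[OF hK] hyp_K_zero[OF hK]
    by (intro differential_zero_maxmin[of 0 UNIV K]) auto
  then show ?thesis
    by (metis inner_eq_zero_iff)
qed

lemma hyp_K_ray_derivatives:
  assumes hK: "hyp_K K DK HK lam CK"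
  shows "((\<lambda>t. K (t *\<^sub>R z)) has_real_derivative DK (t *\<^sub>R z) \<bullet> z) (at t within S)"
    and "((\<lambda>t. DK (t *\<^sub>R z) \<bullet> z) has_real_derivative HK (t *\<^sub>R z) z \<bullet> z) (at t within S)"
proof -
  have ray: "((\<lambda>t. t *\<^sub>R z) has_derivative (\<lambda>s. s *\<^sub>R z)) (at t within S)"
    by (auto intro!: derivative_eq_intros)
  from has_derivative_compose[OF ray hyp_K_has_derivative[OF hK]]
  have "((\<lambda>t. K (t *\<^sub>R z)) has_derivative (\<lambda>s. DK (t *\<^sub>R z) \<bullet> (s *\<^sub>R z))) (at t within S)" .
  moreover have "(\<lambda>s. DK (t *\<^sub>R z) \<bullet> (s *\<^sub>R z)) = (*) (DK (t *\<^sub>R z) \<bullet> z)"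
    by (auto simp: fun_eq_iff)
  ultimately show "((\<lambda>t. K (t *\<^sub>R z)) has_real_derivative DK (t *\<^sub>R z) \<bullet> z) (at t within S)"
    by (simp add: has_field_derivative_def)
  from has_derivative_inner_left[OF has_derivative_compose[OF ray hyp_K_gradient_has_derivative[OF hK]], of z]
  have "((\<lambda>t. DK (t *\<^sub>R z) \<bullet> z) has_derivative (\<lambda>s. HK (t *\<^sub>R z) (s *\<^sub>R z) \<bullet> z)) (at t within S)" .
  moreover have "(\<lambda>s. HK (t *\<^sub>R z) (s *\<^sub>R z) \<bullet> z) = (*) (HK (t *\<^sub>R z) z \<bullet> z)"
    by (auto simp: fun_eq_iff blinfun.scaleR_right)
  ultimately show "((\<lambda>t. DK (t *\<^sub>R z) \<bullet> z) has_real_derivative HK (t *\<^sub>R z) z \<bullet> z) (at t within S)"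
    by (simp add: has_field_derivative_def)
qed

lemma hyp_K_hessian_le:
  assumes hK: "hyp_K K DK HK lam CK"
  shows "HK x v \<bullet> v \<le> CK * (norm v)\<^sup>2"
proof -
  have "HK x v \<bullet> v \<le> norm (HK x v) * norm v"
    by (rule order_trans[OF _ Cauchy_Schwarz_ineq2]) simp
  also have "\<dots> \<le> norm (HK x) * norm v * norm v"
    by (intro mult_right_mono norm_blinfun) auto
  also have "\<dots> \<le> CK * norm v * norm v"
    using hyp_K_hessian_norm_le[OF hK] by (intro mult_right_mono) auto
  finally show ?thesis by (simp add: power2_eq_square)
qed

lemma hyp_K_quadratic_bounds:
  assumes hK: "hyp_K K DK HK lam CK"
  shows "lam / 2 * (norm z)\<^sup>2 \<le> K z" and "K z \<le> CK / 2 * (norm z)\<^sup>2"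
proof -
  note lower = hyp_K_hessian_ge[OF hK]
  note upper = hyp_K_hessian_le[OF hK]
  note K0 = hyp_K_zero[OF hK] and DK0 = hyp_K_gradient_zero[OF hK]
  note ray = hyp_K_ray_derivatives[OF hK, of z]
  have "0 \<le> K (1 *\<^sub>R z) - lam / 2 * 1\<^sup>2 * (norm z)\<^sup>2"
  proof (rule DERIV2_nonneg_imp_nonneg[where a = 1 and f = "\<lambda>t. K (t *\<^sub>R z) - lam / 2 * t\<^sup>2 * (norm z)\<^sup>2"
        and f' = "\<lambda>t. DK (t *\<^sub>R z) \<bullet> z - lam * t * (norm z)\<^sup>2"
        and f'' = "\<lambda>t. HK (t *\<^sub>R z) z \<bullet> z - lam * (norm z)\<^sup>2"])
    show "((\<lambda>t. K (t *\<^sub>R z) - lam / 2 * t\<^sup>2 * (norm z)\<^sup>2) has_real_derivative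
        DK (t *\<^sub>R z) \<bullet> z - lam * t * (norm z)\<^sup>2) (at t within {0..1})" for t
      by (rule derivative_eq_intros ray refl | simp)+
    show "((\<lambda>t. DK (t *\<^sub>R z) \<bullet> z - lam * t * (norm z)\<^sup>2) has_real_derivative
        HK (t *\<^sub>R z) z \<bullet> z - lam * (norm z)\<^sup>2) (at t within {0..1})" for t
      by (rule derivative_eq_intros ray refl | simp)+
  qed (simp_all add: lower K0 DK0)
  then show "lam / 2 * (norm z)\<^sup>2 \<le> K z" by simp
  have "0 \<le> CK / 2 * 1\<^sup>2 * (norm z)\<^sup>2 - K (1 *\<^sub>R z)"
  proof (rule DERIV2_nonneg_imp_nonneg[where a = 1 and f = "\<lambda>t. CK / 2 * t\<^sup>2 * (norm z)\<^sup>2 - K (t *\<^sub>R z)"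
        and f' = "\<lambda>t. CK * t * (norm z)\<^sup>2 - DK (t *\<^sub>R z) \<bullet> z"
        and f'' = "\<lambda>t. CK * (norm z)\<^sup>2 - HK (t *\<^sub>R z) z \<bullet> z"])
    show "((\<lambda>t. CK / 2 * t\<^sup>2 * (norm z)\<^sup>2 - K (t *\<^sub>R z)) has_real_derivative
        CK * t * (norm z)\<^sup>2 - DK (t *\<^sub>R z) \<bullet> z) (at t within {0..1})" for t
      by (rule derivative_eq_intros ray refl | simp)+
    show "((\<lambda>t. CK * t * (norm z)\<^sup>2 - DK (t *\<^sub>R z) \<bullet> z) has_real_derivative
        CK * (norm z)\<^sup>2 - HK (t *\<^sub>R z) z \<bullet> z) (at t within {0..1})" for t
      by (rule derivative_eq_intros ray refl | simp)+
  qed (simp_all add: upper K0 DK0)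
  then show "K z \<le> CK / 2 * (norm z)\<^sup>2" by simp
qed

section \<open>Moments and the interaction energy\<close>

lemma P2_prob_space: "P2 \<mu> \<Longrightarrow> prob_space \<mu>"
  by (simp add: P2_def)

lemma P2_integrable_norm_sq: "P2 \<mu> \<Longrightarrow> integrable \<mu> (\<lambda>x. (norm x)\<^sup>2)"
  by (simp add: P2_def)

lemma P2_borel_measurable: "P2 \<mu> \<Longrightarrow> f \<in> borel_measurable borel \<Longrightarrow> f \<in> borel_measurable \<mu>"
  using measurable_cong_sets[of \<mu> borel borel borel] by (auto simp: P2_def)

lemma P2_integrable_const: "P2 \<mu> \<Longrightarrow> integrable \<mu> (\<lambda>x. c)"
  by (simp add: P2_def prob_space.finite_measure finite_measure.integrable_const)

lemma P2_integrable_id: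
  fixes \<mu> :: "'a::euclidean_space measure"
  assumes "P2 \<mu>"
  shows "integrable \<mu> (\<lambda>x. x)"
proof (rule Bochner_Integration.integrable_bound[of _ "\<lambda>x. 1 + (norm x)\<^sup>2"])
  show "integrable \<mu> (\<lambda>x. 1 + (norm x)\<^sup>2)"
    using assms by (intro Bochner_Integration.integrable_add P2_integrable_const P2_integrable_norm_sq)
  show "(\<lambda>x. x) \<in> borel_measurable \<mu>"
    using assms by (rule P2_borel_measurable) simp
  have "norm x \<le> 1 + (norm x)\<^sup>2" for x :: 'a
  proof (cases "norm x \<le> 1")
    case False
    then have "norm x * 1 \<le> norm x * norm x"
      by (intro mult_left_mono) auto
    then show ?thesis
      by (simp add: power2_eq_square)
  qed (use zero_le_power2[of "norm x"] in linarith)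
  then show "AE x in \<mu>. norm x \<le> norm (1 + (norm x)\<^sup>2)"
    by simp
qed

lemma integral_quadratic:
  fixes \<mu> :: "'a::euclidean_space measure"
  assumes "P2 \<mu>"
  shows "integrable \<mu> (\<lambda>x. (norm x)\<^sup>2 - 2 * (x \<bullet> c) + a)"
    and "(\<integral>x. (norm x)\<^sup>2 - 2 * (x \<bullet> c) + a \<partial>\<mu>) = mom2 \<mu> - 2 * (mom1 \<mu> \<bullet> c) + a"
proof -
  have lin: "integrable \<mu> (\<lambda>x. 2 * (x \<bullet> c))"
    using assms by (intro integrable_mult_right integrable_inner_left P2_integrable_id)
  note ints = P2_integrable_norm_sq[OF assms] lin P2_integrable_const[OF assms]
  show "integrable \<mu> (\<lambda>x. (norm x)\<^sup>2 - 2 * (x \<bullet> c) + a)"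
    by (intro Bochner_Integration.integrable_add Bochner_Integration.integrable_diff ints)
  have "(\<integral>x. (norm x)\<^sup>2 - 2 * (x \<bullet> c) + a \<partial>\<mu>)
      = (\<integral>x. (norm x)\<^sup>2 - 2 * (x \<bullet> c) \<partial>\<mu>) + (\<integral>x. a \<partial>\<mu>)"
    by (intro Bochner_Integration.integral_add Bochner_Integration.integrable_diff ints)
  also have "(\<integral>x. (norm x)\<^sup>2 - 2 * (x \<bullet> c) \<partial>\<mu>) = mom2 \<mu> - (\<integral>x. 2 * (x \<bullet> c) \<partial>\<mu>)"
    unfolding mom2_def by (intro Bochner_Integration.integral_diff ints)
  also have "(\<integral>x. 2 * (x \<bullet> c) \<partial>\<mu>) = 2 * (mom1 \<mu> \<bullet> c)"
    using P2_integrable_id[OF assms] by (simp add: mom1_def)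
  also have "(\<integral>x. a \<partial>\<mu>) = a"
    using P2_prob_space[OF assms] by (simp add: prob_space.prob_space)
  finally show "(\<integral>x. (norm x)\<^sup>2 - 2 * (x \<bullet> c) + a \<partial>\<mu>) = mom2 \<mu> - 2 * (mom1 \<mu> \<bullet> c) + a" .
qed

lemma integral_norm_diff_sq:
  fixes \<nu> :: "'a::euclidean_space measure"
  assumes "P2 \<nu>"
  shows "integrable \<nu> (\<lambda>y. (norm (x - y))\<^sup>2)"
    and "(\<integral>y. (norm (x - y))\<^sup>2 \<partial>\<nu>) = (norm x)\<^sup>2 - 2 * (x \<bullet> mom1 \<nu>) + mom2 \<nu>"
proof -
  have "(norm (x - y))\<^sup>2 = (norm y)\<^sup>2 - 2 * (y \<bullet> x) + (norm x)\<^sup>2" for y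
    by (simp add: power2_norm_eq_inner inner_diff_left inner_diff_right inner_commute)
  then show "integrable \<nu> (\<lambda>y. (norm (x - y))\<^sup>2)"
    and "(\<integral>y. (norm (x - y))\<^sup>2 \<partial>\<nu>) = (norm x)\<^sup>2 - 2 * (x \<bullet> mom1 \<nu>) + mom2 \<nu>"
    using integral_quadratic[OF assms, of x "(norm x)\<^sup>2"] by (simp_all add: inner_commute)
qed

lemma mom2_nonneg: "0 \<le> mom2 \<mu>"
  unfolding mom2_def by (rule integral_nonneg_AE) simp

lemma quadratic_bound_translate:
  fixes x y :: "'a::real_normed_vector"
  assumes K: "\<And>z. K z \<le> c / 2 * (norm z)\<^sup>2" and "0 \<le> c"
  shows "K (x - y) \<le> c * (norm x)\<^sup>2 + c * (norm y)\<^sup>2"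
proof -
  have "(norm (x - y))\<^sup>2 \<le> (norm x + norm y)\<^sup>2"
    by (intro power_mono norm_triangle_ineq4) simp
  also have "\<dots> \<le> 2 * (norm x)\<^sup>2 + 2 * (norm y)\<^sup>2"
    using sum_squares_bound[of "norm x" "norm y"] by (simp add: power2_sum)
  finally have "c / 2 * (norm (x - y))\<^sup>2 \<le> c / 2 * (2 * (norm x)\<^sup>2 + 2 * (norm y)\<^sup>2)"
    using \<open>0 \<le> c\<close> by (intro mult_left_mono) simp_all
  with K[of "x - y"] show ?thesis
    by (simp add: algebra_simps)
qed

lemma inter_le_mom2:
  fixes \<mu> \<nu> :: "'a::euclidean_space measure"
  assumes K: "\<And>z. K z \<le> c / 2 * (norm z)\<^sup>2" and "0 \<le> c" and "P2 \<mu>" "P2 \<nu>"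
  shows "inter K \<mu> \<nu> \<le> ennreal (c * (mom2 \<mu> + mom2 \<nu>))"
proof -
  note K_le = quadratic_bound_translate[OF K \<open>0 \<le> c\<close>]
  have inner: "(\<integral>\<^sup>+ y. ennreal (K (x - y)) \<partial>\<nu>) \<le> ennreal (c * (norm x)\<^sup>2 + c * mom2 \<nu>)" for x
  proof -
    have "(\<integral>\<^sup>+ y. ennreal (K (x - y)) \<partial>\<nu>) \<le> (\<integral>\<^sup>+ y. ennreal (c * (norm x)\<^sup>2 + c * (norm y)\<^sup>2) \<partial>\<nu>)"
      by (intro nn_integral_mono ennreal_leI K_le)
    also have "\<dots> = ennreal (\<integral> y. c * (norm x)\<^sup>2 + c * (norm y)\<^sup>2 \<partial>\<nu>)"
      using \<open>0 \<le> c\<close> by (intro nn_integral_eq_integral Bochner_Integration.integrable_add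
          P2_integrable_const[OF \<open>P2 \<nu>\<close>] integrable_mult_right P2_integrable_norm_sq[OF \<open>P2 \<nu>\<close>]) auto
    also have "(\<integral> y. c * (norm x)\<^sup>2 + c * (norm y)\<^sup>2 \<partial>\<nu>) = c * (norm x)\<^sup>2 + c * mom2 \<nu>"
      using P2_prob_space[OF \<open>P2 \<nu>\<close>] P2_integrable_norm_sq[OF \<open>P2 \<nu>\<close>]
        P2_integrable_const[OF \<open>P2 \<nu>\<close>]
      unfolding mom2_def by (subst Bochner_Integration.integral_add) (auto simp: prob_space.prob_space)
    finally show ?thesis .
  qed
  have "inter K \<mu> \<nu> \<le> (\<integral>\<^sup>+ x. ennreal (c * (norm x)\<^sup>2 + c * mom2 \<nu>) \<partial>\<mu>)"
    unfolding inter_def by (intro nn_integral_mono inner)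
  also have "\<dots> = ennreal (\<integral> x. c * (norm x)\<^sup>2 + c * mom2 \<nu> \<partial>\<mu>)"
    using \<open>0 \<le> c\<close> mom2_nonneg[of \<nu>] by (intro nn_integral_eq_integral Bochner_Integration.integrable_add
        P2_integrable_const[OF \<open>P2 \<mu>\<close>] integrable_mult_right P2_integrable_norm_sq[OF \<open>P2 \<mu>\<close>]) auto
  also have "(\<integral> x. c * (norm x)\<^sup>2 + c * mom2 \<nu> \<partial>\<mu>) = c * (mom2 \<mu> + mom2 \<nu>)"
    using P2_prob_space[OF \<open>P2 \<mu>\<close>] P2_integrable_norm_sq[OF \<open>P2 \<mu>\<close>]
      P2_integrable_const[OF \<open>P2 \<mu>\<close>]
    unfolding mom2_def by (subst Bochner_Integration.integral_add) (auto simp: prob_space.prob_space algebra_simps)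
  finally show ?thesis .
qed

lemma mom2_le_inter:
  fixes \<mu> \<nu> :: "'a::euclidean_space measure"
  assumes K: "\<And>z. c / 2 * (norm z)\<^sup>2 \<le> K z" and "0 \<le> c" and "P2 \<mu>" "P2 \<nu>"
    and centred: "mom1 \<mu> + mom1 \<nu> = 0"
  shows "ennreal (c / 2 * (mom2 \<mu> + mom2 \<nu>)) \<le> inter K \<mu> \<nu>"
proof -
  define q where "q x = c / 2 * ((norm x)\<^sup>2 - 2 * (x \<bullet> mom1 \<nu>) + mom2 \<nu>)" for x
  have q_nonneg: "0 \<le> q x" for x
    using integral_nonneg_AE[of "\<lambda>y. (norm (x - y))\<^sup>2" \<nu>] integral_norm_diff_sq(2)[OF \<open>P2 \<nu>\<close>, of x]
      \<open>0 \<le> c\<close> by (simp add: q_def)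
  have inner: "ennreal (q x) \<le> (\<integral>\<^sup>+ y. ennreal (K (x - y)) \<partial>\<nu>)" for x
  proof -
    have "ennreal (q x) = ennreal (\<integral>y. c / 2 * (norm (x - y))\<^sup>2 \<partial>\<nu>)"
      by (simp add: q_def integral_norm_diff_sq(2)[OF \<open>P2 \<nu>\<close>])
    also have "\<dots> = (\<integral>\<^sup>+ y. ennreal (c / 2 * (norm (x - y))\<^sup>2) \<partial>\<nu>)"
      using \<open>0 \<le> c\<close> by (intro nn_integral_eq_integral[symmetric] integrable_mult_right
          integral_norm_diff_sq(1)[OF \<open>P2 \<nu>\<close>]) auto
    also have "\<dots> \<le> (\<integral>\<^sup>+ y. ennreal (K (x - y)) \<partial>\<nu>)"
      by (intro nn_integral_mono ennreal_leI K)
    finally show ?thesis .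
  qed
  have "mom1 \<mu> \<bullet> mom1 \<nu> \<le> 0"
    using centred by (simp add: eq_neg_iff_add_eq_0[symmetric])
  then have "c / 2 * (mom2 \<mu> + mom2 \<nu>) \<le> (\<integral>x. q x \<partial>\<mu>)"
    using \<open>0 \<le> c\<close> integral_quadratic(2)[OF \<open>P2 \<mu>\<close>, of "mom1 \<nu>" "mom2 \<nu>"]
    by (simp add: q_def mult_left_mono)
  then have "ennreal (c / 2 * (mom2 \<mu> + mom2 \<nu>)) \<le> ennreal (\<integral>x. q x \<partial>\<mu>)"
    by (rule ennreal_leI)
  also have "\<dots> = (\<integral>\<^sup>+ x. ennreal (q x) \<partial>\<mu>)"
    using q_nonneg integral_quadratic(1)[OF \<open>P2 \<mu>\<close>, of "mom1 \<nu>" "mom2 \<nu>"]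
    unfolding q_def by (intro nn_integral_eq_integral[symmetric] integrable_mult_right) auto
  also have "\<dots> \<le> inter K \<mu> \<nu>"
    unfolding inter_def by (intro nn_integral_mono inner)
  finally show ?thesis .
qed

lemma inter_mom2_bounds:
  assumes hK: "hyp_K K DK HK lam CK" and "(\<mu>, \<nu>) \<in> X0"
  shows "ereal (lam / 2 * (mom2 \<mu> + mom2 \<nu>)) \<le> enn2ereal (inter K \<mu> \<nu>)"
    and "enn2ereal (inter K \<mu> \<nu>) \<le> ereal (CK * (mom2 \<mu> + mom2 \<nu>))"
proof -
  have P2: "P2 \<mu>" "P2 \<nu>" and centred: "mom1 \<mu> + mom1 \<nu> = 0"
    using \<open>(\<mu>, \<nu>) \<in> X0\<close> by (simp_all add: X0_def)
  have "ennreal (lam / 2 * (mom2 \<mu> + mom2 \<nu>)) \<le> inter K \<mu> \<nu>"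
    using mom2_le_inter[OF hyp_K_quadratic_bounds(1)[OF hK] _ P2 centred] hyp_K_lam_pos[OF hK]
    by simp
  moreover have "inter K \<mu> \<nu> \<le> ennreal (CK * (mom2 \<mu> + mom2 \<nu>))"
    by (rule inter_le_mom2[OF hyp_K_quadratic_bounds(2)[OF hK] hyp_K_CK_nonneg[OF hK] P2])
  ultimately show "ereal (lam / 2 * (mom2 \<mu> + mom2 \<nu>)) \<le> enn2ereal (inter K \<mu> \<nu>)"
    and "enn2ereal (inter K \<mu> \<nu>) \<le> ereal (CK * (mom2 \<mu> + mom2 \<nu>))"
    using hyp_K_lam_pos[OF hK] hyp_K_CK_nonneg[OF hK] mom2_nonneg[of \<mu>] mom2_nonneg[of \<nu>]
    by (simp_all add: less_eq_ennreal.rep_eq)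
qed

lemma inter_bounded_iff_mom2_bounded:
  assumes hK: "hyp_K K DK HK lam CK" and "S \<subseteq> X0"
  shows "(\<exists>C::real. \<forall>p\<in>S. inter K (fst p) (snd p) \<le> ennreal C) \<longleftrightarrow>
    (\<exists>C::real. \<forall>p\<in>S. mom2 (fst p) \<le> C \<and> mom2 (snd p) \<le> C)"
proof
  assume "\<exists>C::real. \<forall>p\<in>S. inter K (fst p) (snd p) \<le> ennreal C"
  then obtain C where C: "\<forall>p\<in>S. inter K (fst p) (snd p) \<le> ennreal C" ..
  have "mom2 (fst p) \<le> 2 * max C 0 / lam \<and> mom2 (snd p) \<le> 2 * max C 0 / lam" if "p \<in> S" for p
  proof -
    have "P2 (fst p)" "P2 (snd p)" "mom1 (fst p) + mom1 (snd p) = 0"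
      using that \<open>S \<subseteq> X0\<close> by (auto simp: X0_def)
    then have "ennreal (lam / 2 * (mom2 (fst p) + mom2 (snd p))) \<le> inter K (fst p) (snd p)"
      by (rule mom2_le_inter[OF hyp_K_quadratic_bounds(1)[OF hK] less_imp_le[OF hyp_K_lam_pos[OF hK]]])
    also have "\<dots> \<le> ennreal C"
      using C that by blast
    finally have "lam / 2 * (mom2 (fst p) + mom2 (snd p)) \<le> max C 0"
      by (auto simp: ennreal_le_iff2)
    then have "mom2 (fst p) + mom2 (snd p) \<le> 2 * max C 0 / lam"
      using hyp_K_lam_pos[OF hK] by (simp add: field_simps)
    then show ?thesis
      using mom2_nonneg[of "fst p"] mom2_nonneg[of "snd p"] by linarith
  qed
  then have "\<forall>p\<in>S. mom2 (fst p) \<le> 2 * max C 0 / lam \<and> mom2 (snd p) \<le> 2 * max C 0 / lam"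
    by blast
  then show "\<exists>C::real. \<forall>p\<in>S. mom2 (fst p) \<le> C \<and> mom2 (snd p) \<le> C" ..
next
  assume "\<exists>C::real. \<forall>p\<in>S. mom2 (fst p) \<le> C \<and> mom2 (snd p) \<le> C"
  then obtain C where C: "\<forall>p\<in>S. mom2 (fst p) \<le> C \<and> mom2 (snd p) \<le> C" ..
  have "inter K (fst p) (snd p) \<le> ennreal (CK * (2 * C))" if "p \<in> S" for p
  proof -
    have "P2 (fst p)" "P2 (snd p)"
      using that \<open>S \<subseteq> X0\<close> by (auto simp: X0_def)
    then have "inter K (fst p) (snd p) \<le> ennreal (CK * (mom2 (fst p) + mom2 (snd p)))"
      by (rule inter_le_mom2[OF hyp_K_quadratic_bounds(2)[OF hK] hyp_K_CK_nonneg[OF hK]])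
    also have "\<dots> \<le> ennreal (CK * (2 * C))"
      using C that hyp_K_CK_nonneg[OF hK] by (intro ennreal_leI mult_left_mono) auto
    finally show ?thesis .
  qed
  then show "\<exists>C::real. \<forall>p\<in>S. inter K (fst p) (snd p) \<le> ennreal C" by blast
qed

section \<open>Densities and the energy functional\<close>

lemma continuous_on_comp_borel_measurable:
  assumes g: "continuous_on A g" and f: "f \<in> borel_measurable M"
    and "\<And>x. x \<in> space M \<Longrightarrow> f x \<in> A"
  shows "(\<lambda>x. g (f x)) \<in> borel_measurable M"
  using measurable_comp[OF measurable_restrict_space2[OF _ f] borel_measurable_continuous_on_restrict[OF g]]
    assms(3) by (auto simp: comp_def)

lemma is_densD:
  assumes "is_dens \<mu> f"
  shows "f \<in> borel_measurable lborel" "0 \<le> f x" "\<mu> = density lborel (\<lambda>x. ennreal (f x))"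
  using assms by (simp_all add: is_dens_def)

lemma is_dens_AE_unique:
  assumes "is_dens \<mu> f" "is_dens \<mu> g"
  shows "AE x in lborel. f x = g x"
proof -
  have "AE x in lborel. ennreal (f x) = ennreal (g x)"
    using assms by (intro sigma_finite_measure.density_unique[OF sigma_finite_lborel])
      (auto simp: is_dens_def)
  then show ?thesis
    by eventually_elim (use assms in \<open>simp add: is_dens_def\<close>)
qed

lemma is_dens_nn_integral_eq_1:
  assumes "is_dens \<mu> f" "P2 \<mu>"
  shows "(\<integral>\<^sup>+ x. ennreal (f x) \<partial>lborel) = 1"
proof -
  have "emeasure \<mu> (space \<mu>) = 1"
    using P2_prob_space[OF \<open>P2 \<mu>\<close>] by (simp add: prob_space.emeasure_space_1)
  then show ?thesis
    using is_densD[OF \<open>is_dens \<mu> f\<close>] by (simp add: emeasure_density)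
qed

lemma conv_eq_integral:
  assumes K: "K \<in> borel_measurable borel" and "is_dens \<nu> f"
  shows "conv K f x = (\<integral>y. K (x - y) \<partial>\<nu>)"
proof -
  note f = is_densD[OF \<open>is_dens \<nu> f\<close>]
  have "(\<integral>y. K (x - y) \<partial>\<nu>) = (\<integral>y. f y *\<^sub>R K (x - y) \<partial>lborel)"
    unfolding f(3) using K f(1,2) by (intro integral_density) auto
  then show ?thesis
    by (simp add: conv_def mult.commute)
qed

lemma conv_nonneg:
  assumes "\<And>z. 0 \<le> K z" "K \<in> borel_measurable borel" "is_dens \<nu> f"
  shows "0 \<le> conv K f x"
  unfolding conv_eq_integral[OF assms(2,3)] by (rule integral_nonneg_AE) (simp add: assms(1))

lemma conv_measurable:
  assumes K: "K \<in> borel_measurable borel" and "is_dens \<nu> f"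
  shows "conv K f \<in> borel_measurable lborel"
proof -
  have [measurable]: "K \<in> borel_measurable borel" "f \<in> borel_measurable lborel"
    using K is_densD[OF \<open>is_dens \<nu> f\<close>] by simp_all
  have "(\<lambda>x. \<integral>y. K (x - y) * f y \<partial>lborel) \<in> borel_measurable lborel"
    by (rule lborel.borel_measurable_lebesgue_integral) measurable
  then show ?thesis
    unfolding conv_def[abs_def] .
qed

lemma hyp_K_integrable_translate:
  assumes hK: "hyp_K K DK HK lam CK" and "P2 \<nu>"
  shows "integrable \<nu> (\<lambda>y. K (x - y))"
proof (rule Bochner_Integration.integrable_bound)
  show "integrable \<nu> (\<lambda>y. CK * (norm x)\<^sup>2 + CK * (norm y)\<^sup>2)"
    using \<open>P2 \<nu>\<close> by (intro Bochner_Integration.integrable_add P2_integrable_const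
        integrable_mult_right P2_integrable_norm_sq)
  have [measurable]: "K \<in> borel_measurable borel"
    by (rule hyp_K_measurable[OF hK])
  show "(\<lambda>y. K (x - y)) \<in> borel_measurable \<nu>"
    using \<open>P2 \<nu>\<close> by (rule P2_borel_measurable) measurable
  show "AE y in \<nu>. norm (K (x - y)) \<le> norm (CK * (norm x)\<^sup>2 + CK * (norm y)\<^sup>2)"
    using hyp_K_nonneg[OF hK, of "x - _"] hyp_K_CK_nonneg[OF hK]
      quadratic_bound_translate[OF hyp_K_quadratic_bounds(2)[OF hK] hyp_K_CK_nonneg[OF hK]]
    by (intro always_eventually allI) simp
qed

lemma inter_eq_nn_integral_conv:
  assumes hK: "hyp_K K DK HK lam CK"
    and "is_dens \<mu> f1" "is_dens \<nu> f2" "P2 \<nu>"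
  shows "inter K \<mu> \<nu> = (\<integral>\<^sup>+ x. ennreal (f1 x * conv K f2 x) \<partial>lborel)"
proof -
  note f1 = is_densD[OF \<open>is_dens \<mu> f1\<close>]
  note K = hyp_K_measurable[OF hK] and K_nonneg = hyp_K_nonneg[OF hK]
  have "inter K \<mu> \<nu> = (\<integral>\<^sup>+ x. ennreal (conv K f2 x) \<partial>\<mu>)"
    unfolding inter_def conv_eq_integral[OF K \<open>is_dens \<nu> f2\<close>]
    using hyp_K_integrable_translate[OF hK \<open>P2 \<nu>\<close>] K_nonneg
    by (simp add: nn_integral_eq_integral)
  also have "\<dots> = (\<integral>\<^sup>+ x. ennreal (f1 x) * ennreal (conv K f2 x) \<partial>lborel)"
    unfolding f1(3) using f1(1) conv_measurable[OF K \<open>is_dens \<nu> f2\<close>]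
    by (intro nn_integral_density) auto
  also have "\<dots> = (\<integral>\<^sup>+ x. ennreal (f1 x * conv K f2 x) \<partial>lborel)"
    using f1(2) conv_nonneg[OF K_nonneg K \<open>is_dens \<nu> f2\<close>] by (simp add: ennreal_mult)
  finally show ?thesis .
qed

lemma integrand_measurable:
  assumes hK: "hyp_K K DK HK lam CK" and hF1: "hyp_F F1 F1' F1''" and hF2: "hyp_F F2 F2' F2''"
    and hh: "hyp_h h Dh Hh" and "is_dens \<mu> f1" "is_dens \<nu> f2"
  shows "(\<lambda>x. F1 (f1 x)) \<in> borel_measurable lborel" "(\<lambda>x. F2 (f2 x)) \<in> borel_measurable lborel"
    "(\<lambda>x. h (f1 x, f2 x)) \<in> borel_measurable lborel"
    "(\<lambda>x. f1 x * conv K f2 x) \<in> borel_measurable lborel"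
    "integrand F1 F2 h K \<epsilon> f1 f2 \<in> borel_measurable lborel"
proof -
  note f1 = is_densD[OF \<open>is_dens \<mu> f1\<close>] and f2 = is_densD[OF \<open>is_dens \<nu> f2\<close>]
  show F1: "(\<lambda>x. F1 (f1 x)) \<in> borel_measurable lborel"
    using f1 by (intro continuous_on_comp_borel_measurable[OF hyp_F_continuous_on[OF hF1]]) auto
  show F2: "(\<lambda>x. F2 (f2 x)) \<in> borel_measurable lborel"
    using f2 by (intro continuous_on_comp_borel_measurable[OF hyp_F_continuous_on[OF hF2]]) auto
  show h: "(\<lambda>x. h (f1 x, f2 x)) \<in> borel_measurable lborel"
    using f1 f2 by (intro continuous_on_comp_borel_measurable[OF hyp_h_continuous_on[OF hh]]
        borel_measurable_Pair) (auto simp: quadrant_def)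
  show conv: "(\<lambda>x. f1 x * conv K f2 x) \<in> borel_measurable lborel"
    using f1 conv_measurable[OF hyp_K_measurable[OF hK] \<open>is_dens \<nu> f2\<close>] by simp
  show "integrand F1 F2 h K \<epsilon> f1 f2 \<in> borel_measurable lborel"
    unfolding integrand_def[abs_def] using F1 F2 h conv by simp
qed

lemma integrand_AE_unique:
  assumes hK: "hyp_K K DK HK lam CK"
    and "is_dens \<mu> f1" "is_dens \<nu> f2" "is_dens \<mu> g1" "is_dens \<nu> g2"
  shows "AE x in lborel. integrand F1 F2 h K \<epsilon> f1 f2 x = integrand F1 F2 h K \<epsilon> g1 g2 x"
proof -
  have "conv K f2 = conv K g2"
    using conv_eq_integral[OF hyp_K_measurable[OF hK]] assms(3,5) by auto
  moreover have "AE x in lborel. f1 x = g1 x" "AE x in lborel. f2 x = g2 x"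
    using is_dens_AE_unique assms(2-5) by blast+
  ultimately show ?thesis
    by (auto simp: integrand_def)
qed

lemma integral_integrand_independent_of_density:
  assumes hK: "hyp_K K DK HK lam CK" and hF1: "hyp_F F1 F1' F1''" and hF2: "hyp_F F2 F2' F2''"
    and hh: "hyp_h h Dh Hh"
    and g: "is_dens \<mu> g1" "is_dens \<nu> g2" and f: "is_dens \<mu> f1" "is_dens \<nu> f2"
  shows "integrable lborel (integrand F1 F2 h K \<epsilon> g1 g2)
      \<longleftrightarrow> integrable lborel (integrand F1 F2 h K \<epsilon> f1 f2)"
    and "(\<integral>x. integrand F1 F2 h K \<epsilon> g1 g2 x \<partial>lborel) = (\<integral>x. integrand F1 F2 h K \<epsilon> f1 f2 x \<partial>lborel)"
proof -
  note measurable = integrand_measurable(5)[OF hK hF1 hF2 hh]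
  have AE: "AE x in lborel. integrand F1 F2 h K \<epsilon> g1 g2 x = integrand F1 F2 h K \<epsilon> f1 f2 x"
    by (rule integrand_AE_unique[OF hK g f])
  show "integrable lborel (integrand F1 F2 h K \<epsilon> g1 g2)
      \<longleftrightarrow> integrable lborel (integrand F1 F2 h K \<epsilon> f1 f2)"
    by (rule integrable_cong_AE[OF measurable[OF g] measurable[OF f] AE])
  show "(\<integral>x. integrand F1 F2 h K \<epsilon> g1 g2 x \<partial>lborel) = (\<integral>x. integrand F1 F2 h K \<epsilon> f1 f2 x \<partial>lborel)"
    by (rule integral_cong_AE[OF measurable[OF g] measurable[OF f] AE])
qed

text \<open>The energy does not depend on the densities chosen by the SOME in its definition.\<close>
lemma energy_eq:
  assumes hK: "hyp_K K DK HK lam CK" and hF1: "hyp_F F1 F1' F1''" and hF2: "hyp_F F2 F2' F2''"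
    and hh: "hyp_h h Dh Hh" and f: "is_dens \<mu> f1" "is_dens \<nu> f2"
  shows "energy F1 F2 h K \<epsilon> (\<mu>, \<nu>) = (if integrable lborel (integrand F1 F2 h K \<epsilon> f1 f2)
      then ereal (\<integral>x. integrand F1 F2 h K \<epsilon> f1 f2 x \<partial>lborel) else \<infinity>)"
proof -
  define Q where "Q = (\<lambda>(g1, g2). is_dens \<mu> g1 \<and> is_dens \<nu> g2 \<and>
    integrable lborel (integrand F1 F2 h K \<epsilon> g1 g2))"
  have E: "energy F1 F2 h K \<epsilon> (\<mu>, \<nu>) = (if \<exists>g1 g2. Q (g1, g2) then
      (let (g1, g2) = Eps Q in ereal (\<integral>x. integrand F1 F2 h K \<epsilon> g1 g2 x \<partial>lborel)) else \<infinity>)"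
    unfolding energy_def Q_def by (simp; blast)
  note same = integral_integrand_independent_of_density[OF hK hF1 hF2 hh _ _ f]
  show ?thesis
  proof (cases "integrable lborel (integrand F1 F2 h K \<epsilon> f1 f2)")
    case True
    then have "Q (f1, f2)"
      using f by (simp add: Q_def)
    then have "Q (Eps Q)"
      by (rule someI)
    moreover obtain g1 g2 where g: "Eps Q = (g1, g2)"
      by (cases "Eps Q")
    ultimately have "is_dens \<mu> g1" "is_dens \<nu> g2"
      by (simp_all add: Q_def)
    with \<open>Q (f1, f2)\<close> True show ?thesis
      unfolding E g by (auto simp: same(2))
  next
    case False
    then have "\<not> Q (g1, g2)" for g1 g2
      using same(1)[of g1 g2] by (auto simp: Q_def)
    with False show ?thesis
      unfolding E by auto
  qed
qed

lemma nn_integral_deriv_F_le: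
  assumes hF: "hyp_F F F' F''" and \<alpha>: "\<forall>r\<ge>0. F' r \<le> \<alpha> * (min 1 r + F r)"
    and f: "is_dens \<mu> f" "P2 \<mu>"
    and B: "enn2ereal (\<integral>\<^sup>+ x. ennreal (F (f x)) \<partial>lborel) \<le> B"
  shows "enn2ereal (\<integral>\<^sup>+ x. ennreal (F' (f x)) \<partial>lborel) \<le> ereal \<alpha> * (1 + B)"
proof -
  note f_nonneg = is_densD(2)[OF f(1)]
  have "0 < \<alpha>"
    by (rule hyp_F_deriv_bound_coeff_pos[OF hF \<alpha>])
  have F_f: "(\<lambda>x. F (f x)) \<in> borel_measurable lborel"
    using is_densD[OF f(1)]
    by (intro continuous_on_comp_borel_measurable[OF hyp_F_continuous_on[OF hF]]) auto
  have pointwise: "F' (f x) \<le> \<alpha> * f x + \<alpha> * F (f x)" for x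
  proof -
    have "F' (f x) \<le> \<alpha> * (min 1 (f x) + F (f x))"
      using \<alpha> f_nonneg by simp
    also have "\<dots> \<le> \<alpha> * (f x + F (f x))"
      using \<open>0 < \<alpha>\<close> by (intro mult_left_mono) auto
    finally show ?thesis
      by (simp add: algebra_simps)
  qed
  have "(\<integral>\<^sup>+ x. ennreal (F' (f x)) \<partial>lborel)
      \<le> (\<integral>\<^sup>+ x. ennreal \<alpha> * ennreal (f x) + ennreal \<alpha> * ennreal (F (f x)) \<partial>lborel)"
  proof (rule nn_integral_mono)
    fix x
    have "ennreal (F' (f x)) \<le> ennreal (\<alpha> * f x + \<alpha> * F (f x))"
      by (rule ennreal_leI[OF pointwise])
    also have "\<dots> = ennreal \<alpha> * ennreal (f x) + ennreal \<alpha> * ennreal (F (f x))"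
      using \<open>0 < \<alpha>\<close> f_nonneg hyp_F_nonneg[OF hF f_nonneg] by (simp add: ennreal_mult)
    finally show "ennreal (F' (f x)) \<le> ennreal \<alpha> * ennreal (f x) + ennreal \<alpha> * ennreal (F (f x))" .
  qed
  also have "\<dots> = ennreal \<alpha> * (\<integral>\<^sup>+ x. ennreal (f x) \<partial>lborel)
      + ennreal \<alpha> * (\<integral>\<^sup>+ x. ennreal (F (f x)) \<partial>lborel)"
    using is_densD(1)[OF f(1)] F_f by (simp add: nn_integral_add nn_integral_cmult)
  also have "\<dots> = ennreal \<alpha> * (1 + (\<integral>\<^sup>+ x. ennreal (F (f x)) \<partial>lborel))"
    by (simp add: is_dens_nn_integral_eq_1[OF f] distrib_left)
  finally have "enn2ereal (\<integral>\<^sup>+ x. ennreal (F' (f x)) \<partial>lborel)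
      \<le> ereal \<alpha> * (1 + enn2ereal (\<integral>\<^sup>+ x. ennreal (F (f x)) \<partial>lborel))"
    using \<open>0 < \<alpha>\<close>
    by (simp add: less_eq_ennreal.rep_eq times_ennreal.rep_eq plus_ennreal.rep_eq one_ennreal.rep_eq)
  also have "\<dots> \<le> ereal \<alpha> * (1 + B)"
    using \<open>0 < \<alpha>\<close> B by (intro ereal_mult_left_mono add_left_mono) auto
  finally show ?thesis .
qed

section \<open>Bounds on the energy\<close>

locale energy_setting =
  fixes K :: "'a::euclidean_space \<Rightarrow> real" and DK :: "'a \<Rightarrow> 'a" and HK :: "'a \<Rightarrow> 'a \<Rightarrow>\<^sub>L 'a"
    and lam CK :: real
    and F1 F1' F1'' F2 F2' F2'' :: "real \<Rightarrow> real"
    and h :: "real \<times> real \<Rightarrow> real" and Dh :: "real \<times> real \<Rightarrow> real \<times> real"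
    and Hh :: "real \<times> real \<Rightarrow> (real \<times> real) \<Rightarrow>\<^sub>L (real \<times> real)"
    and \<epsilon>0 \<epsilon> :: real
  assumes hK: "hyp_K K DK HK lam CK"
    and hF1: "hyp_F F1 F1' F1''" and hF2: "hyp_F F2 F2' F2''"
    and hh: "hyp_h h Dh Hh" and htheta: "hyp_theta F1' F1'' F2' F2'' Hh"
    and cv: "convex_on quadrant (\<lambda>r. F1 (fst r) + F2 (snd r) + 2 * \<epsilon>0 * h r)"
    and \<epsilon>: "0 < \<epsilon>" "\<epsilon> \<le> \<epsilon>0"
begin

abbreviation "I f1 f2 \<equiv> integrand F1 F2 h K \<epsilon> f1 f2"
abbreviation "\<E> p \<equiv> energy F1 F2 h K \<epsilon> p"

lemma integrand_bounds:
  assumes "is_dens \<mu> f1" "is_dens \<nu> f2"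
  shows "0 \<le> F1 (f1 x)" "0 \<le> F2 (f2 x)" "0 \<le> f1 x * conv K f2 x"
    "F1 (f1 x) + F2 (f2 x) \<le> 2 * I f1 f2 x" "f1 x * conv K f2 x \<le> I f1 f2 x" "0 \<le> I f1 f2 x"
proof -
  note f1 = is_densD[OF assms(1)] and f2 = is_densD[OF assms(2)]
  show F1: "0 \<le> F1 (f1 x)" and F2: "0 \<le> F2 (f2 x)"
    using hyp_F_nonneg[OF hF1] hyp_F_nonneg[OF hF2] f1(2) f2(2) by blast+
  show c: "0 \<le> f1 x * conv K f2 x"
    using f1(2) conv_nonneg[OF hyp_K_nonneg[OF hK] hyp_K_measurable[OF hK] assms(2)] by simp
  have "F1 (f1 x) + F2 (f2 x) \<le> 2 * (F1 (f1 x) + F2 (f2 x) + \<epsilon> * h (f1 x, f2 x))"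
    using F_sum_le_twice_F_plus_h[OF hF1 hF2 hh cv \<epsilon>, of "(f1 x, f2 x)"] f1(2) f2(2)
    by (simp add: quadrant_def)
  with F1 F2 c show "F1 (f1 x) + F2 (f2 x) \<le> 2 * I f1 f2 x" "f1 x * conv K f2 x \<le> I f1 f2 x"
    "0 \<le> I f1 f2 x"
    by (simp_all add: integrand_def)
qed

lemma energy_eq_integral:
  "is_dens \<mu> f1 \<Longrightarrow> is_dens \<nu> f2 \<Longrightarrow> integrable lborel (I f1 f2) \<Longrightarrow>
    \<E> (\<mu>, \<nu>) = ereal (\<integral>x. I f1 f2 x \<partial>lborel)"
  using energy_eq[OF hK hF1 hF2 hh] by simp

lemma energy_infinite:
  "is_dens \<mu> f1 \<Longrightarrow> is_dens \<nu> f2 \<Longrightarrow> \<not> integrable lborel (I f1 f2) \<Longrightarrow> \<E> (\<mu>, \<nu>) = \<infinity>"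
  using energy_eq[OF hK hF1 hF2 hh] by simp

lemma energy_finite_imp_densities:
  assumes "\<E> (\<mu>, \<nu>) \<noteq> \<infinity>"
  obtains f1 f2 where "is_dens \<mu> f1" "is_dens \<nu> f2" "integrable lborel (I f1 f2)"
  using assms unfolding energy_def by (auto split: if_splits)

lemma nn_integral_le_energy:
  assumes f: "is_dens \<mu> f1" "is_dens \<nu> f2" and "0 < c" and g: "\<And>x. g x \<le> c * I f1 f2 x"
  shows "enn2ereal (\<integral>\<^sup>+ x. ennreal (g x) \<partial>lborel) \<le> ereal c * \<E> (\<mu>, \<nu>)"
proof (cases "integrable lborel (I f1 f2)")
  case True
  have I_nonneg: "0 \<le> (\<integral>x. I f1 f2 x \<partial>lborel)"
    using integrand_bounds(6)[OF f] by (simp add: integral_nonneg_AE)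
  have "(\<integral>\<^sup>+ x. ennreal (g x) \<partial>lborel) \<le> (\<integral>\<^sup>+ x. ennreal (c * I f1 f2 x) \<partial>lborel)"
    by (intro nn_integral_mono ennreal_leI g)
  also have "\<dots> = ennreal (c * (\<integral>x. I f1 f2 x \<partial>lborel))"
    using True \<open>0 < c\<close> integrand_bounds(6)[OF f]
    by (subst nn_integral_eq_integral) auto
  finally have "enn2ereal (\<integral>\<^sup>+ x. ennreal (g x) \<partial>lborel) \<le> ereal (c * (\<integral>x. I f1 f2 x \<partial>lborel))"
    using \<open>0 < c\<close> I_nonneg by (simp add: less_eq_ennreal.rep_eq)
  then show ?thesis
    using energy_eq_integral[OF f True] by simp
next
  case False
  then show ?thesis
    using energy_infinite[OF f False] \<open>0 < c\<close> by simp
qed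

lemma F_sum_le_twice_energy:
  "is_dens \<mu> f1 \<Longrightarrow> is_dens \<nu> f2 \<Longrightarrow>
    enn2ereal (\<integral>\<^sup>+ x. ennreal (F1 (f1 x) + F2 (f2 x)) \<partial>lborel) \<le> 2 * \<E> (\<mu>, \<nu>)"
  using nn_integral_le_energy[of \<mu> f1 \<nu> f2 2] integrand_bounds(4) by simp

lemma inter_le_energy:
  assumes "P2 \<nu>"
  shows "enn2ereal (inter K \<mu> \<nu>) \<le> \<E> (\<mu>, \<nu>)"
proof (cases "\<E> (\<mu>, \<nu>) = \<infinity>")
  case False
  then obtain f1 f2 where f: "is_dens \<mu> f1" "is_dens \<nu> f2"
    by (rule energy_finite_imp_densities)
  show ?thesis
    unfolding inter_eq_nn_integral_conv[OF hK f \<open>P2 \<nu>\<close>]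
    using nn_integral_le_energy[OF f, of 1] integrand_bounds(5)[OF f] by simp
qed simp

lemma deriv_F_le_energy:
  assumes \<alpha>1: "\<forall>r\<ge>0. F1' r \<le> \<alpha>1 * (min 1 r + F1 r)" and \<alpha>2: "\<forall>r\<ge>0. F2' r \<le> \<alpha>2 * (min 1 r + F2 r)"
    and f: "is_dens \<mu> f1" "is_dens \<nu> f2" and "P2 \<mu>" "P2 \<nu>"
  shows "enn2ereal (\<integral>\<^sup>+ x. ennreal (F1' (f1 x)) \<partial>lborel) \<le> ereal \<alpha>1 * (1 + 2 * \<E> (\<mu>, \<nu>))"
    and "enn2ereal (\<integral>\<^sup>+ x. ennreal (F2' (f2 x)) \<partial>lborel) \<le> ereal \<alpha>2 * (1 + 2 * \<E> (\<mu>, \<nu>))"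
proof -
  have "(\<integral>\<^sup>+ x. ennreal (F1 (f1 x)) \<partial>lborel) \<le> (\<integral>\<^sup>+ x. ennreal (F1 (f1 x) + F2 (f2 x)) \<partial>lborel)"
    and "(\<integral>\<^sup>+ x. ennreal (F2 (f2 x)) \<partial>lborel) \<le> (\<integral>\<^sup>+ x. ennreal (F1 (f1 x) + F2 (f2 x)) \<partial>lborel)"
    using integrand_bounds(1,2)[OF f] by (auto intro!: nn_integral_mono ennreal_leI)
  then have "enn2ereal (\<integral>\<^sup>+ x. ennreal (F1 (f1 x)) \<partial>lborel) \<le> 2 * \<E> (\<mu>, \<nu>)"
    and "enn2ereal (\<integral>\<^sup>+ x. ennreal (F2 (f2 x)) \<partial>lborel) \<le> 2 * \<E> (\<mu>, \<nu>)"
    using F_sum_le_twice_energy[OF f] by (auto simp: less_eq_ennreal.rep_eq intro: order_trans)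
  then show "enn2ereal (\<integral>\<^sup>+ x. ennreal (F1' (f1 x)) \<partial>lborel) \<le> ereal \<alpha>1 * (1 + 2 * \<E> (\<mu>, \<nu>))"
    and "enn2ereal (\<integral>\<^sup>+ x. ennreal (F2' (f2 x)) \<partial>lborel) \<le> ereal \<alpha>2 * (1 + 2 * \<E> (\<mu>, \<nu>))"
    by (simp_all add: nn_integral_deriv_F_le[OF hF1 \<alpha>1 f(1) \<open>P2 \<mu>\<close>]
        nn_integral_deriv_F_le[OF hF2 \<alpha>2 f(2) \<open>P2 \<nu>\<close>])
qed

definition L1_terms_le :: "real \<Rightarrow> 'a measure \<times> 'a measure \<Rightarrow> bool" where
  "L1_terms_le C p \<longleftrightarrow> (\<exists>f1 f2. is_dens (fst p) f1 \<and> is_dens (snd p) f2 \<and>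
     integrable lborel (\<lambda>x. F1 (f1 x)) \<and> integrable lborel (\<lambda>x. F2 (f2 x)) \<and>
     integrable lborel (\<lambda>x. f1 x * conv K f2 x) \<and>
     (\<integral>x. F1 (f1 x) \<partial>lborel) \<le> C \<and> (\<integral>x. F2 (f2 x) \<partial>lborel) \<le> C \<and>
     (\<integral>x. f1 x * conv K f2 x \<partial>lborel) \<le> C)"

lemma L1_terms_le_of_energy_le:
  assumes "\<E> (\<mu>, \<nu>) \<le> ereal C"
  shows "L1_terms_le (2 * C) (\<mu>, \<nu>)"
proof -
  have "\<E> (\<mu>, \<nu>) \<noteq> \<infinity>"
    using assms by auto
  then obtain f1 f2 where f: "is_dens \<mu> f1" "is_dens \<nu> f2" and int: "integrable lborel (I f1 f2)"
    by (rule energy_finite_imp_densities)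
  have le_C: "(\<integral>x. I f1 f2 x \<partial>lborel) \<le> C"
    using assms energy_eq_integral[OF f int] by simp
  have I_nonneg: "0 \<le> (\<integral>x. I f1 f2 x \<partial>lborel)"
    using integrand_bounds(6)[OF f] by (simp add: integral_nonneg_AE)
  note measurable = integrand_measurable[OF hK hF1 hF2 hh f]
  have dominated: "integrable lborel u \<and> (\<integral>x. u x \<partial>lborel) \<le> 2 * C"
    if "u \<in> borel_measurable lborel" "\<And>x. 0 \<le> u x" "\<And>x. u x \<le> 2 * I f1 f2 x" for u
  proof
    have int2: "integrable lborel (\<lambda>x. 2 * I f1 f2 x)"
      using int by simp
    show int_u: "integrable lborel u"
      using that integrand_bounds(6)[OF f] by (intro Bochner_Integration.integrable_bound[OF int2]) auto
    have "(\<integral>x. u x \<partial>lborel) \<le> (\<integral>x. 2 * I f1 f2 x \<partial>lborel)"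
      using that by (intro integral_mono int_u int2) auto
    with le_C show "(\<integral>x. u x \<partial>lborel) \<le> 2 * C"
      by simp
  qed
  have "F1 (f1 x) \<le> 2 * I f1 f2 x" "F2 (f2 x) \<le> 2 * I f1 f2 x"
    "f1 x * conv K f2 x \<le> 2 * I f1 f2 x" for x
    using integrand_bounds[OF f, of x] by linarith+
  with dominated[of "\<lambda>x. F1 (f1 x)"] dominated[of "\<lambda>x. F2 (f2 x)"]
    dominated[of "\<lambda>x. f1 x * conv K f2 x"] measurable integrand_bounds[OF f] f
  show ?thesis
    unfolding L1_terms_le_def by auto
qed

lemma energy_le_of_L1_terms_le:
  assumes \<kappa>: "0 \<le> \<kappa>" "\<And>r. r \<in> quadrant \<Longrightarrow> \<bar>h r\<bar> \<le> \<kappa> * F1 (fst r)"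
    and "L1_terms_le C (\<mu>, \<nu>)"
  shows "\<E> (\<mu>, \<nu>) \<le> ereal ((3 + \<epsilon> * \<kappa>) * C)"
proof -
  obtain f1 f2 where f: "is_dens \<mu> f1" "is_dens \<nu> f2"
    and int: "integrable lborel (\<lambda>x. F1 (f1 x))" "integrable lborel (\<lambda>x. F2 (f2 x))"
      "integrable lborel (\<lambda>x. f1 x * conv K f2 x)"
    and le: "(\<integral>x. F1 (f1 x) \<partial>lborel) \<le> C" "(\<integral>x. F2 (f2 x) \<partial>lborel) \<le> C"
      "(\<integral>x. f1 x * conv K f2 x \<partial>lborel) \<le> C"
    using \<open>L1_terms_le C (\<mu>, \<nu>)\<close> unfolding L1_terms_le_def by auto
  have h_le: "\<bar>h (f1 x, f2 x)\<bar> \<le> \<kappa> * F1 (f1 x)" for x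
    using \<kappa>(2)[of "(f1 x, f2 x)"] is_densD(2)[OF f(1)] is_densD(2)[OF f(2)]
    by (simp add: quadrant_def)
  have int_F1: "integrable lborel (\<lambda>x. \<kappa> * F1 (f1 x))"
    using int(1) by simp
  have "\<bar>h (f1 x, f2 x)\<bar> \<le> \<bar>\<kappa> * F1 (f1 x)\<bar>" for x
    using h_le[of x] abs_ge_self[of "\<kappa> * F1 (f1 x)"] by linarith
  then have int_h: "integrable lborel (\<lambda>x. h (f1 x, f2 x))"
    using integrand_measurable(3)[OF hK hF1 hF2 hh f]
    by (intro Bochner_Integration.integrable_bound[OF int_F1]) auto
  have I_eq: "I f1 f2 = (\<lambda>x. F1 (f1 x) + F2 (f2 x) + \<epsilon> * h (f1 x, f2 x) + f1 x * conv K f2 x)"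
    by (simp add: fun_eq_iff integrand_def)
  have "integrable lborel (I f1 f2)"
    unfolding I_eq using int int_h by simp
  moreover have "(\<integral>x. I f1 f2 x \<partial>lborel) = (\<integral>x. F1 (f1 x) \<partial>lborel) + (\<integral>x. F2 (f2 x) \<partial>lborel)
      + \<epsilon> * (\<integral>x. h (f1 x, f2 x) \<partial>lborel) + (\<integral>x. f1 x * conv K f2 x \<partial>lborel)"
    unfolding I_eq using int int_h by simp
  moreover have "\<epsilon> * (\<integral>x. h (f1 x, f2 x) \<partial>lborel) \<le> \<epsilon> * (\<kappa> * C)"
  proof -
    have "(\<integral>x. h (f1 x, f2 x) \<partial>lborel) \<le> (\<integral>x. \<kappa> * F1 (f1 x) \<partial>lborel)"
      using h_le by (intro integral_mono int_h int_F1) (simp add: abs_le_iff)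
    also have "\<dots> \<le> \<kappa> * C"
      using le(1) \<kappa>(1) by (simp add: mult_left_mono)
    finally show ?thesis
      using \<epsilon> by (simp add: mult_left_mono)
  qed
  moreover have "(3 + \<epsilon> * \<kappa>) * C = C + C + \<epsilon> * (\<kappa> * C) + C"
    by (simp add: algebra_simps)
  ultimately show ?thesis
    using energy_eq_integral[OF f] le by simp
qed

lemma energy_bounded_iff_L1_terms_bounded:
  "(\<exists>C. \<forall>p\<in>S. \<E> p \<le> ereal C) \<longleftrightarrow> (\<exists>C. \<forall>p\<in>S. L1_terms_le C p)"
proof
  assume "\<exists>C. \<forall>p\<in>S. \<E> p \<le> ereal C"
  then obtain C where "\<forall>p\<in>S. \<E> p \<le> ereal C" ..
  then have "\<forall>p\<in>S. L1_terms_le (2 * C) p"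
    using L1_terms_le_of_energy_le by (metis prod.collapse)
  then show "\<exists>C. \<forall>p\<in>S. L1_terms_le C p" ..
next
  assume "\<exists>C. \<forall>p\<in>S. L1_terms_le C p"
  then obtain C where "\<forall>p\<in>S. L1_terms_le C p" ..
  moreover obtain \<kappa> where "0 \<le> \<kappa>" "\<And>r. r \<in> quadrant \<Longrightarrow> \<bar>h r\<bar> \<le> \<kappa> * F1 (fst r)"
    using abs_h_le_F1[OF hF1 hF2 hh htheta] by blast
  ultimately have "\<forall>p\<in>S. \<E> p \<le> ereal ((3 + \<epsilon> * \<kappa>) * C)"
    using energy_le_of_L1_terms_le by (metis prod.collapse)
  then show "\<exists>C. \<forall>p\<in>S. \<E> p \<le> ereal C" ..
qed

end

theorem lemma2p5:
  fixes K :: "'a::euclidean_space \<Rightarrow> real"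
    and DK :: "'a \<Rightarrow> 'a" and HK :: "'a \<Rightarrow> 'a \<Rightarrow>\<^sub>L 'a"
    and lam CK :: real
    and F1 F1' F1'' F2 F2' F2'' :: "real \<Rightarrow> real"
    and h :: "real \<times> real \<Rightarrow> real" and Dh :: "real \<times> real \<Rightarrow> real \<times> real"
    and Hh :: "real \<times> real \<Rightarrow> (real \<times> real) \<Rightarrow>\<^sub>L (real \<times> real)"
    and \<epsilon>0 \<epsilon> :: real
    and \<rho>1 \<rho>2 :: "'a measure"
    and S :: "('a measure \<times> 'a measure) set"
  assumes hK: "hyp_K K DK HK lam CK"
    and hF1: "hyp_F F1 F1' F1''" and hF2: "hyp_F F2 F2' F2''"
    and hh: "hyp_h h Dh Hh"
    and htheta: "hyp_theta F1' F1'' F2' F2'' Hh"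
    and eps0: "0 < \<epsilon>0" "convex_on quadrant (\<lambda>r. F1 (fst r) + F2 (snd r) + 2 * \<epsilon>0 * h r)"
    and eps: "0 < \<epsilon>" "\<epsilon> \<le> \<epsilon>0"
    and rho: "P2 \<rho>1" "P2 \<rho>2"
    and S: "\<forall>p\<in>S. P2 (fst p) \<and> P2 (snd p)"
  shows
    \<comment> \<open>(1)\<close>
    "(\<forall>f1 f2. is_dens \<rho>1 f1 \<and> is_dens \<rho>2 f2 \<longrightarrow>
        enn2ereal (\<integral>\<^sup>+ x. ennreal (F1 (f1 x) + F2 (f2 x)) \<partial>lborel)
          \<le> 2 * energy F1 F2 h K \<epsilon> (\<rho>1, \<rho>2))
     \<and> enn2ereal (inter K \<rho>1 \<rho>2) \<le> energy F1 F2 h K \<epsilon> (\<rho>1, \<rho>2)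
     \<and> ((\<exists>C::real. \<forall>p\<in>S. energy F1 F2 h K \<epsilon> p \<le> ereal C) \<longleftrightarrow>
        (\<exists>C::real. \<forall>p\<in>S. \<exists>f1 f2. is_dens (fst p) f1 \<and> is_dens (snd p) f2 \<and>
           integrable lborel (\<lambda>x. F1 (f1 x)) \<and> integrable lborel (\<lambda>x. F2 (f2 x)) \<and>
           integrable lborel (\<lambda>x. f1 x * conv K f2 x) \<and>
           (\<integral>x. F1 (f1 x) \<partial>lborel) \<le> C \<and> (\<integral>x. F2 (f2 x) \<partial>lborel) \<le> C \<and>
           (\<integral>x. f1 x * conv K f2 x \<partial>lborel) \<le> C))
    \<comment> \<open>(2)\<close>
    \<and> (\<forall>\<alpha>1 \<alpha>2 :: real. (\<forall>r\<ge>0. F1' r \<le> \<alpha>1 * (min 1 r + F1 r)) \<longrightarrow>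
       (\<forall>r\<ge>0. F2' r \<le> \<alpha>2 * (min 1 r + F2 r)) \<longrightarrow>
       (\<forall>f1 f2. is_dens \<rho>1 f1 \<and> is_dens \<rho>2 f2 \<longrightarrow>
          enn2ereal (\<integral>\<^sup>+ x. ennreal (F1' (f1 x)) \<partial>lborel)
            \<le> ereal \<alpha>1 * (1 + 2 * energy F1 F2 h K \<epsilon> (\<rho>1, \<rho>2)) \<and>
          enn2ereal (\<integral>\<^sup>+ x. ennreal (F2' (f2 x)) \<partial>lborel)
            \<le> ereal \<alpha>2 * (1 + 2 * energy F1 F2 h K \<epsilon> (\<rho>1, \<rho>2))))
    \<comment> \<open>(3)\<close>
    \<and> ((\<rho>1, \<rho>2) \<in> X0 \<longrightarrow>
       ereal (lam / 2 * (mom2 \<rho>1 + mom2 \<rho>2)) \<le> enn2ereal (inter K \<rho>1 \<rho>2) \<and>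
       enn2ereal (inter K \<rho>1 \<rho>2) \<le> ereal (CK * (mom2 \<rho>1 + mom2 \<rho>2)))
    \<and> (S \<subseteq> X0 \<longrightarrow>
       ((\<exists>C::real. \<forall>p\<in>S. inter K (fst p) (snd p) \<le> ennreal C) \<longleftrightarrow>
       (\<exists>C::real. \<forall>p\<in>S. mom2 (fst p) \<le> C \<and> mom2 (snd p) \<le> C)))"
proof -
  interpret energy_setting K DK HK lam CK F1 F1' F1'' F2 F2' F2'' h Dh Hh \<epsilon>0 \<epsilon>
    using hK hF1 hF2 hh htheta eps0(2) eps by unfold_locales
  show ?thesis
    by (intro conjI allI impI; (elim conjE)?)
      (rule F_sum_le_twice_energy inter_le_energy[OF rho(2)]
        energy_bounded_iff_L1_terms_bounded[of S, unfolded L1_terms_le_def]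
        deriv_F_le_energy[OF _ _ _ _ rho] inter_mom2_bounds[OF hK]
        inter_bounded_iff_mom2_bounded[OF hK]; assumption)+
qed

end
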